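(* Let $\kappa:\operatorname{Arb}\to\operatorname{Mould}$ be the unique operad morphism with $\kappa([2\triangleleft 1])=\frac{1}{u_1(u_1+u_2)}$ and $\kappa([1][2])=\frac{1}{u_1u_2}$. Then for every shrub $P$, $\kappa(P)=f_P$.
   Context: A shrub $P$ on a finite set $I$ is a set $E$ of edges (unordered pairs of distinct elements of $I$) with a height function $h_P:I\to\mathbb{N}$; $j$ covers $i$ if $\{i,j\}\in E$ and $h_P(j)=h_P(i)+1$. Axioms: (1) edges join vertices whose heights differ by $1$; (2) every vertex of positive height covers some vertex; (3) no four distinct $a,b,c,d$ with $a$ covering $b$ and $c$, $c$ covering $d$, $\{b,d\}\notin E$; (4) no five distinct $a,b,c,d,e$ with $a$ covering $c,d$, $b$ covering $d,e$, $\{a,e\}\notin E$, $\{b,c\}\notin E$. $\operatorname{Arb}$ is the set-theoretic operad with $\operatorname{Arb}(I)$ the set of shrubs on $I$, relabelling action, unit the one-vertex shrub, and composition $P\circ_i P'$ defined as the shrub on $(I\setminus\{i\})\sqcup I'$ with height $h_P$ on $I\setminus\{i\}$ and $h_{P'}+h_P(i)$ on $I'$, whose edges are the edges of $P$ not containing $i$, the edges of $P'$, and all pairs $\{j,k\}$ with $j$ adjacent to $i$ in $P$ and $k$ of height $0$ in $P'$. $[a][b]$: shrub on $\{a,b\}$ without edges; $[a\triangleleft b]$: shrub on $\{a,b\}$ with edge $\{a,b\}$, $h(a)=0$, $h(b)=1$. $\operatorname{Mould}(I)=\mathbb{Q}(u_i:i\in I)$ with renaming action and $f\circ_i g=(\sum_{j\in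 J}u_j)\,g\,f|_{u_i=\sum_{j\in J}u_j}$. A vertex is ramified if it covers at least two distinct vertices; two ramified vertices are equivalent if they cover the same set of vertices; $\operatorname{Ram}(P)$ is the set of equivalence classes, and for $r\in\operatorname{Ram}(P)$, $r^-$ is the common set of vertices covered by elements of $r$. For $S\subseteq I$, $\langle S\rangle_P$ is the set of $j\in I$ such that every descending path from $j$ (each vertex covering the next) to a vertex of height $0$ meets $S$. $P\setminus\langle r\rangle_P$ is the shrub obtained by restricting $P$ to $I\setminus\langle r\rangle_P$. With $u[S]=\sum_{k\in S}u_k$, $$f_P=\frac{1}{\prod_{i\in I}u[\langle\{i\}\rangle_P]}\prod_{r\in\operatorname{Ram}(P)}\frac{u[\langle r^-\rangle_{P\setminus\langle r\rangle_P}]}{u[\langle r^-\rangle_P]}.$$ *)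

theory Defs
  imports Complex_Main "HOL-Library.Poly_Mapping" "HOL-Computational_Algebra.Fraction_Field"
begin

text \<open>Multivariate polynomials over Q in the variables u_n (n a natural number):
  a monomial is a finitely supported exponent vector, a polynomial a finitely
  supported coefficient map on monomials.  This is an integral domain, and its
  fraction field is the field of rational functions in countably many variables.\<close>

type_synonym mpoly = "(nat \<Rightarrow>\<^sub>0 nat) \<Rightarrow>\<^sub>0 rat"
type_synonym rfun = "mpoly fract"

definition cst :: "rat \<Rightarrow> rfun" where
  "cst c = Fract (Poly_Mapping.single 0 c) 1"

definition u :: "nat \<Rightarrow> rfun" where
  "u n = Fract (Poly_Mapping.single (Poly_Mapping.single n 1) 1) 1"

definition usum :: "nat set \<Rightarrow> rfun" where
  "usum S = (\<Sum>k\<in>S. u k)"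

definition pvars :: "mpoly \<Rightarrow> nat set" where
  "pvars p = (\<Union>m\<in>Poly_Mapping.keys p. Poly_Mapping.keys m)"

definition peval :: "(nat \<Rightarrow> rfun) \<Rightarrow> mpoly \<Rightarrow> rfun" where
  "peval g p = (\<Sum>m\<in>Poly_Mapping.keys p.
      cst (Poly_Mapping.lookup p m) * (\<Prod>n\<in>Poly_Mapping.keys m. g n ^ Poly_Mapping.lookup m n))"

text \<open>Substitution u_n := g n in a rational function (well defined, independent
  of the chosen representative, whenever some representative has a denominator
  not evaluating to 0; this is the case for all uses below).\<close>
definition rsubst :: "(nat \<Rightarrow> rfun) \<Rightarrow> rfun \<Rightarrow> rfun" where
  "rsubst g F = (THE r. \<exists>a b. b \<noteq> 0 \<and> peval g b \<noteq> 0 \<and> F = Fract a b \<and> r = peval g a / peval g b)"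

definition mould :: "nat set \<Rightarrow> rfun set" where
  "mould I = {F. \<exists>a b. b \<noteq> 0 \<and> pvars a \<subseteq> I \<and> pvars b \<subseteq> I \<and> F = Fract a b}"

definition mrename :: "(nat \<Rightarrow> nat) \<Rightarrow> rfun \<Rightarrow> rfun" where
  "mrename \<sigma> F = rsubst (\<lambda>n. u (\<sigma> n)) F"

definition mcomp :: "nat set \<Rightarrow> nat \<Rightarrow> nat set \<Rightarrow> rfun \<Rightarrow> rfun \<Rightarrow> rfun" where
  "mcomp I i J f g = usum J * g * rsubst (\<lambda>n. if n = i then usum J else u n) f"

text \<open>A shrub: vertex set, edges (2-element sets of vertices), height function
  (normalised to 0 outside the vertex set, so that representations are canonical).\<close>
record shrub =
  verts :: "nat set"
  edges :: "nat set set"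
  ht :: "nat \<Rightarrow> nat"

definition covers :: "shrub \<Rightarrow> nat \<Rightarrow> nat \<Rightarrow> bool" where
  "covers P j i \<longleftrightarrow> {i, j} \<in> edges P \<and> ht P j = ht P i + 1"

definition is_shrub :: "shrub \<Rightarrow> bool" where
  "is_shrub P \<longleftrightarrow>
     finite (verts P) \<and> verts P \<noteq> {} \<and>
     (\<forall>e\<in>edges P. \<exists>a b. a \<in> verts P \<and> b \<in> verts P \<and> a \<noteq> b \<and> e = {a, b}) \<and>
     (\<forall>n. n \<notin> verts P \<longrightarrow> ht P n = 0) \<and>
     \<comment> \<open>axiom (1)\<close>
     (\<forall>a b. {a, b} \<in> edges P \<longrightarrow> ht P a = ht P b + 1 \<or> ht P b = ht P a + 1) \<and>
     \<comment> \<open>axiom (2)\<close>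
     (\<forall>j\<in>verts P. ht P j > 0 \<longrightarrow> (\<exists>i. covers P j i)) \<and>
     \<comment> \<open>axiom (3)\<close>
     \<not> (\<exists>a b c d. distinct [a, b, c, d] \<and> covers P a b \<and> covers P a c \<and> covers P c d
            \<and> {b, d} \<notin> edges P) \<and>
     \<comment> \<open>axiom (4)\<close>
     \<not> (\<exists>a b c d e. distinct [a, b, c, d, e] \<and> covers P a c \<and> covers P a d \<and>
            covers P b d \<and> covers P b e \<and> {a, e} \<notin> edges P \<and> {b, c} \<notin> edges P)"

definition unit_shrub :: "nat \<Rightarrow> shrub" where
  "unit_shrub n = \<lparr>verts = {n}, edges = {}, ht = (\<lambda>_. 0)\<rparr>"

definition two_roots :: "nat \<Rightarrow> nat \<Rightarrow> shrub" where
  "two_roots a b = \<lparr>verts = {a, b}, edges = {}, ht = (\<lambda>_. 0)\<rparr>"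

text \<open>[a \<triangleleft> b]: edge {a,b}, h(a) = 0, h(b) = 1.\<close>
definition edge_shrub :: "nat \<Rightarrow> nat \<Rightarrow> shrub" where
  "edge_shrub a b = \<lparr>verts = {a, b}, edges = {{a, b}}, ht = (\<lambda>n. if n = b then 1 else 0)\<rparr>"

definition shrub_rename :: "(nat \<Rightarrow> nat) \<Rightarrow> shrub \<Rightarrow> shrub" where
  "shrub_rename \<sigma> P = \<lparr>verts = \<sigma> ` verts P, edges = (\<lambda>e. \<sigma> ` e) ` edges P,
                        ht = (\<lambda>n. ht P (inv \<sigma> n))\<rparr>"

text \<open>Partial composition P o_i Q (used when verts Q is disjoint from verts P - {i}).\<close>
definition shrub_comp :: "shrub \<Rightarrow> nat \<Rightarrow> shrub \<Rightarrow> shrub" where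
  "shrub_comp P i Q =
    \<lparr>verts = (verts P - {i}) \<union> verts Q,
     edges = {e \<in> edges P. i \<notin> e} \<union> edges Q \<union>
             {{j, k} | j k. {j, i} \<in> edges P \<and> k \<in> verts Q \<and> ht Q k = 0},
     ht = (\<lambda>n. if n \<in> verts P - {i} then ht P n
               else if n \<in> verts Q then ht Q n + ht P i else 0)\<rparr>"

text \<open>Operad morphisms Arb \<rightarrow> Mould: species morphism (values in Mould(I),
  equivariant), preserving units (the unit of Mould is 1/u_x) and partial compositions.\<close>
definition arb_mould_morphism :: "(shrub \<Rightarrow> rfun) \<Rightarrow> bool" where
  "arb_mould_morphism \<kappa> \<longleftrightarrow>
     (\<forall>P. is_shrub P \<longrightarrow> \<kappa> P \<in> mould (verts P)) \<and>
     (\<forall>n. \<kappa> (unit_shrub n) = 1 / u n) \<and>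
     (\<forall>\<sigma> P. bij \<sigma> \<and> is_shrub P \<longrightarrow> \<kappa> (shrub_rename \<sigma> P) = mrename \<sigma> (\<kappa> P)) \<and>
     (\<forall>P Q i. is_shrub P \<and> is_shrub Q \<and> i \<in> verts P \<and> verts Q \<inter> (verts P - {i}) = {} \<longrightarrow>
        \<kappa> (shrub_comp P i Q) = mcomp (verts P) i (verts Q) (\<kappa> P) (\<kappa> Q))"

definition desc_path :: "shrub \<Rightarrow> nat list \<Rightarrow> bool" where
  "desc_path P xs \<longleftrightarrow> xs \<noteq> [] \<and> hd xs \<in> verts P \<and>
     (\<forall>t. Suc t < length xs \<longrightarrow> covers P (xs ! t) (xs ! Suc t)) \<and> ht P (last xs) = 0"

definition gen :: "shrub \<Rightarrow> nat set \<Rightarrow> nat set" where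
  "gen P S = {j \<in> verts P. \<forall>xs. desc_path P xs \<and> hd xs = j \<longrightarrow> set xs \<inter> S \<noteq> {}}"

definition below :: "shrub \<Rightarrow> nat \<Rightarrow> nat set" where
  "below P v = {i. covers P v i}"

definition ramified :: "shrub \<Rightarrow> nat \<Rightarrow> bool" where
  "ramified P v \<longleftrightarrow> v \<in> verts P \<and> (\<exists>a b. a \<noteq> b \<and> covers P v a \<and> covers P v b)"

definition Ram :: "shrub \<Rightarrow> nat set set" where
  "Ram P = {{v. ramified P v \<and> below P v = below P w} | w. ramified P w}"

definition rminus :: "shrub \<Rightarrow> nat set \<Rightarrow> nat set" where
  "rminus P r = the_elem (below P ` r)"

definition restrict_shrub :: "shrub \<Rightarrow> nat set \<Rightarrow> shrub" where
  "restrict_shrub P X = \<lparr>verts = verts P \<inter> X, edges = {e \<in> edges P. e \<subseteq> X},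
                          ht = (\<lambda>n. if n \<in> verts P \<inter> X then ht P n else 0)\<rparr>"

definition f_shrub :: "shrub \<Rightarrow> rfun" where
  "f_shrub P =
     (1 / (\<Prod>i\<in>verts P. usum (gen P {i}))) *
     (\<Prod>r\<in>Ram P. usum (gen (restrict_shrub P (verts P - gen P r)) (rminus P r))
                   / usum (gen P (rminus P r)))"

end

theory Submission
  imports Defs
begin

text \<open>
  Both \<open>\<kappa>\<close> and \<open>f\<close> obey the same recursion, so they agree by induction on the number of
  vertices. Every shrub \<open>P\<close> with at least two vertices arises from \<open>Q = P - y\<close> by grafting a
  generator at a vertex \<open>x\<close>: \<open>[x \<triangleleft> y]\<close> if \<open>y\<close> is a leaf covering only \<open>x\<close>, or
  \<open>[x][y]\<close> if \<open>x\<close> and \<open>y\<close> are twins (same height, same neighbours). Such a pair exists: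
  if all heights vanish any two vertices are twins; otherwise, among the vertices of maximal
  height take one covering as few vertices as possible; it either covers a single vertex,
  which makes it a leaf, or, by axioms (3) and (4), any two vertices it covers are twins.

  For \<open>\<kappa>\<close>, the grafting gives \<open>\<kappa>(P) = (u\<^sub>x + u\<^sub>y) \<kappa>(gen) \<kappa>(Q)|\<^bsub>u\<^sub>x := u\<^sub>x + u\<^sub>y\<^esub>\<close>. For \<open>f\<close>, the
  substitution adjoins \<open>y\<close> to every set \<open>\<langle>S\<rangle>\<close> containing \<open>x\<close>, which is exactly how these
  sets change from \<open>Q\<close> to \<open>P\<close>; the classes of \<open>Ram P\<close> are those of \<open>Ram Q\<close> together,
  in the twin case, with the class of vertices covering exactly \<open>{x, y}\<close>, whose factor
  accounts for the remaining discrepancy.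
\<close>


section \<open>Substitution in rational functions\<close>

definition monom_eval :: "(nat \<Rightarrow> rfun) \<Rightarrow> (nat \<Rightarrow>\<^sub>0 nat) \<Rightarrow> rfun" where
  "monom_eval g m = (\<Prod>n\<in>Poly_Mapping.keys m. g n ^ Poly_Mapping.lookup m n)"

lemma monom_eval_superset:
  assumes "finite K" "Poly_Mapping.keys m \<subseteq> K"
  shows "monom_eval g m = (\<Prod>n\<in>K. g n ^ Poly_Mapping.lookup m n)"
  unfolding monom_eval_def
  by (rule prod.mono_neutral_left) (use assms in \<open>auto simp: in_keys_iff\<close>)

lemma monom_eval_add: "monom_eval g (m1 + m2) = monom_eval g m1 * monom_eval g m2"
proof -
  let ?K = "Poly_Mapping.keys m1 \<union> Poly_Mapping.keys m2"
  have "monom_eval g (m1 + m2) = (\<Prod>n\<in>?K. g n ^ Poly_Mapping.lookup (m1 + m2) n)"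
    by (rule monom_eval_superset) (auto simp: keys_add)
  also have "\<dots> = (\<Prod>n\<in>?K. g n ^ Poly_Mapping.lookup m1 n) * (\<Prod>n\<in>?K. g n ^ Poly_Mapping.lookup m2 n)"
    by (simp add: lookup_add power_add prod.distrib)
  also have "\<dots> = monom_eval g m1 * monom_eval g m2"
    by (simp add: monom_eval_superset[of ?K])
  finally show ?thesis .
qed

lemma monom_eval_zero [simp]: "monom_eval g 0 = 1"
  by (simp add: monom_eval_def)

lemma cst_zero [simp]: "cst 0 = 0"
  by (simp add: cst_def Zero_fract_def)

lemma cst_one [simp]: "cst 1 = 1"
  by (simp add: cst_def One_fract_def one_poly_mapping_def)

lemma cst_add: "cst (a + b) = cst a + cst b"
  by (simp add: cst_def single_add)

lemma cst_mult: "cst (a * b) = cst a * cst b"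
  by (simp add: cst_def mult_single)

lemma peval_eq_sum_superset:
  assumes "finite K" "Poly_Mapping.keys p \<subseteq> K"
  shows "peval g p = (\<Sum>m\<in>K. cst (Poly_Mapping.lookup p m) * monom_eval g m)"
  unfolding peval_def monom_eval_def[symmetric]
  by (rule sum.mono_neutral_left) (use assms in \<open>auto simp: in_keys_iff\<close>)

lemma peval_add: "peval g (p + q) = peval g p + peval g q"
proof -
  let ?K = "Poly_Mapping.keys p \<union> Poly_Mapping.keys q"
  have "peval g (p + q) = (\<Sum>m\<in>?K. cst (Poly_Mapping.lookup (p + q) m) * monom_eval g m)"
    by (rule peval_eq_sum_superset) (auto simp: keys_add)
  also have "\<dots> = (\<Sum>m\<in>?K. cst (Poly_Mapping.lookup p m) * monom_eval g m)
                 + (\<Sum>m\<in>?K. cst (Poly_Mapping.lookup q m) * monom_eval g m)"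
    by (simp add: lookup_add cst_add distrib_right sum.distrib)
  also have "\<dots> = peval g p + peval g q"
    by (simp add: peval_eq_sum_superset[of ?K])
  finally show ?thesis .
qed

lemma peval_zero [simp]: "peval g 0 = 0"
  by (simp add: peval_def)

lemma peval_single: "peval g (Poly_Mapping.single m c) = cst c * monom_eval g m"
  by (simp add: peval_def monom_eval_def)

lemma update_eq_add_single:
  "a \<notin> Poly_Mapping.keys f \<Longrightarrow> Poly_Mapping.update a b f = f + Poly_Mapping.single a b"
  by (rule poly_mapping_eqI) (auto simp: lookup_update lookup_add lookup_single in_keys_iff when_def)

lemma peval_single_mult:
  "peval g (Poly_Mapping.single a b * q) = cst b * monom_eval g a * peval g q"
proof (induction q rule: update_induct)
  case (update f c d)
  then show ?case
    by (simp add: update_eq_add_single distrib_left peval_add mult_single peval_single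
        monom_eval_add cst_mult)
qed simp

lemma peval_mult: "peval g (p * q) = peval g p * peval g q"
proof (induction p rule: update_induct)
  case (update f a b)
  then show ?case
    by (simp add: update_eq_add_single distrib_right peval_add peval_single_mult peval_single)
qed simp

lemma peval_one [simp]: "peval g 1 = 1"
  using peval_single[of g 0 1] by (simp add: one_poly_mapping_def)

definition substitutable :: "(nat \<Rightarrow> rfun) \<Rightarrow> rfun \<Rightarrow> bool" where
  "substitutable g F \<longleftrightarrow> (\<exists>a b. b \<noteq> 0 \<and> peval g b \<noteq> 0 \<and> F = Fract a b)"

lemma rsubst_Fract:
  assumes "b \<noteq> 0" "peval g b \<noteq> 0"
  shows "rsubst g (Fract a b) = peval g a / peval g b"
  unfolding rsubst_def
proof (rule the_equality)
  fix r assume "\<exists>a' b'. b' \<noteq> 0 \<and> peval g b' \<noteq> 0 \<and> Fract a b = Fract a' b' \<and> r = peval g a' / peval g b'"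
  then obtain a' b' where h: "b' \<noteq> 0" "peval g b' \<noteq> 0" "Fract a b = Fract a' b'"
    "r = peval g a' / peval g b'"
    by blast
  from h(3) assms(1) h(1) have "peval g (a * b') = peval g (a' * b)"
    by (simp add: eq_fract)
  then have "peval g a' = peval g a * peval g b' / peval g b"
    using assms(2) by (simp add: peval_mult field_simps)
  then show "r = peval g a / peval g b"
    using h(2,4) by simp
qed (use assms in blast)

lemma substitutableI: "b \<noteq> 0 \<Longrightarrow> peval g b \<noteq> 0 \<Longrightarrow> substitutable g (Fract a b)"
  unfolding substitutable_def by blast

lemma substitutableE:
  assumes "substitutable g F"
  obtains a b where "b \<noteq> 0" "peval g b \<noteq> 0" "F = Fract a b"
    "rsubst g F = peval g a / peval g b"
  using assms rsubst_Fract unfolding substitutable_def by blast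

lemma substitutable_mult:
  assumes "substitutable g F" "substitutable g G"
  shows "substitutable g (F * G)" and "rsubst g (F * G) = rsubst g F * rsubst g G"
proof -
  obtain a b where ab: "b \<noteq> 0" "peval g b \<noteq> 0" "F = Fract a b" "rsubst g F = peval g a / peval g b"
    using assms(1) by (rule substitutableE)
  obtain c d where cd: "d \<noteq> 0" "peval g d \<noteq> 0" "G = Fract c d" "rsubst g G = peval g c / peval g d"
    using assms(2) by (rule substitutableE)
  have FG: "F * G = Fract (a * c) (b * d)" and nz: "b * d \<noteq> 0" "peval g (b * d) \<noteq> 0"
    using ab cd by (simp_all add: peval_mult)
  show "substitutable g (F * G)"
    unfolding FG using nz by (rule substitutableI)
  show "rsubst g (F * G) = rsubst g F * rsubst g G"
    unfolding FG rsubst_Fract[OF nz] using ab cd by (simp add: peval_mult)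
qed

lemma substitutable_add:
  assumes "substitutable g F" "substitutable g G"
  shows "substitutable g (F + G)" and "rsubst g (F + G) = rsubst g F + rsubst g G"
proof -
  obtain a b where ab: "b \<noteq> 0" "peval g b \<noteq> 0" "F = Fract a b" "rsubst g F = peval g a / peval g b"
    using assms(1) by (rule substitutableE)
  obtain c d where cd: "d \<noteq> 0" "peval g d \<noteq> 0" "G = Fract c d" "rsubst g G = peval g c / peval g d"
    using assms(2) by (rule substitutableE)
  have FG: "F + G = Fract (a * d + c * b) (b * d)" and nz: "b * d \<noteq> 0" "peval g (b * d) \<noteq> 0"
    using ab cd by (simp_all add: peval_mult)
  show "substitutable g (F + G)"
    unfolding FG using nz by (rule substitutableI)
  show "rsubst g (F + G) = rsubst g F + rsubst g G"
    unfolding FG rsubst_Fract[OF nz] using ab cd by (simp add: peval_mult peval_add field_simps)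
qed

lemma substitutable_inverse:
  assumes "substitutable g F" "rsubst g F \<noteq> 0"
  shows "substitutable g (inverse F)" and "rsubst g (inverse F) = inverse (rsubst g F)"
proof -
  obtain a b where ab: "b \<noteq> 0" "peval g b \<noteq> 0" "F = Fract a b" "rsubst g F = peval g a / peval g b"
    using assms(1) by (rule substitutableE)
  have nz: "a \<noteq> 0" "peval g a \<noteq> 0"
    using ab assms(2) by auto
  have F': "inverse F = Fract b a"
    using ab by simp
  show "substitutable g (inverse F)"
    unfolding F' using nz by (rule substitutableI)
  show "rsubst g (inverse F) = inverse (rsubst g F)"
    unfolding F' rsubst_Fract[OF nz] using ab by simp
qed

lemma substitutable_divide:
  assumes "substitutable g F" "substitutable g G" "rsubst g G \<noteq> 0"
  shows "substitutable g (F / G)" and "rsubst g (F / G) = rsubst g F / rsubst g G"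
  using substitutable_mult[OF assms(1) substitutable_inverse(1)[OF assms(2,3)]]
    substitutable_inverse(2)[OF assms(2,3)]
  by (simp_all add: divide_inverse)

lemma substitutable_one: "substitutable g 1" and rsubst_one: "rsubst g 1 = 1"
  using substitutableI[of 1 g 1] rsubst_Fract[of 1 g 1] by (simp_all flip: One_fract_def)

lemma substitutable_zero: "substitutable g 0" and rsubst_zero: "rsubst g 0 = 0"
  using substitutableI[of 1 g 0] rsubst_Fract[of 1 g 0] by (simp_all flip: Zero_fract_def)

lemma substitutable_u: "substitutable g (u n)" and rsubst_u: "rsubst g (u n) = g n"
proof -
  have "peval g (Poly_Mapping.single (Poly_Mapping.single n 1) 1) = g n"
    by (simp add: peval_single monom_eval_def)
  moreover have "(1::mpoly) \<noteq> 0" "peval g 1 \<noteq> 0"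
    by simp_all
  ultimately show "substitutable g (u n)" "rsubst g (u n) = g n"
    unfolding u_def using substitutableI rsubst_Fract by simp_all
qed

lemma substitutable_usum:
  assumes "finite T"
  shows "substitutable g (usum T)" and "rsubst g (usum T) = (\<Sum>k\<in>T. g k)"
  using assms unfolding usum_def
proof (induction T rule: finite_induct)
  case empty
  show "substitutable g (\<Sum>k\<in>{}. u k)" "rsubst g (\<Sum>k\<in>{}. u k) = (\<Sum>k\<in>{}. g k)"
    by (simp_all add: substitutable_zero rsubst_zero)
next
  case (insert x F)
  then show "substitutable g (\<Sum>k\<in>insert x F. u k)"
    "rsubst g (\<Sum>k\<in>insert x F. u k) = (\<Sum>k\<in>insert x F. g k)"
    using substitutable_add[OF substitutable_u] rsubst_u by simp_all
qed

lemma substitutable_prod: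
  assumes "finite A" "\<And>i. i \<in> A \<Longrightarrow> substitutable g (F i)"
  shows "substitutable g (\<Prod>i\<in>A. F i)" and "rsubst g (\<Prod>i\<in>A. F i) = (\<Prod>i\<in>A. rsubst g (F i))"
proof -
  have "substitutable g (\<Prod>i\<in>A. F i) \<and> rsubst g (\<Prod>i\<in>A. F i) = (\<Prod>i\<in>A. rsubst g (F i))"
    using assms
    by (induction A rule: finite_induct) (simp_all add: substitutable_one rsubst_one substitutable_mult)
  then show "substitutable g (\<Prod>i\<in>A. F i)" "rsubst g (\<Prod>i\<in>A. F i) = (\<Prod>i\<in>A. rsubst g (F i))"
    by simp_all
qed

lemma usum_nonzero:
  assumes "finite T" "T \<noteq> {}"
  shows "usum T \<noteq> 0"
proof
  assume "usum T = 0"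
  then have "rsubst (\<lambda>_. 1) (usum T) = 0"
    by (simp add: rsubst_zero)
  then have "(of_nat (card T) :: mpoly fract) = 0"
    using substitutable_usum(2)[OF assms(1), of "\<lambda>_. 1"] by simp
  moreover have "card T \<noteq> 0"
    using assms by simp
  then have "(Poly_Mapping.single 0 (of_nat (card T)) :: mpoly) \<noteq> 0"
    by simp
  then have "(of_nat (card T) :: mpoly) \<noteq> 0"
    by (simp add: single_of_nat)
  ultimately show False
    by (simp add: of_nat_fract eq_fract Zero_fract_def)
qed

lemma u_nonzero: "u m \<noteq> 0"
  using usum_nonzero[of "{m}"] by (simp add: usum_def)


section \<open>Descending paths and the sets \<open>\<langle>S\<rangle>\<^sub>P\<close>\<close>

text \<open>\<open>avoids P S j\<close>: some descending path from \<open>j\<close> to height \<open>0\<close> misses \<open>S\<close>, so that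
  \<open>\<langle>S\<rangle>\<^sub>P\<close> consists of the vertices \<open>j\<close> with \<open>\<not> avoids P S j\<close>.\<close>

inductive avoids :: "shrub \<Rightarrow> nat set \<Rightarrow> nat \<Rightarrow> bool" for P S where
  base: "j \<notin> S \<Longrightarrow> ht P j = 0 \<Longrightarrow> avoids P S j"
| step: "j \<notin> S \<Longrightarrow> covers P j i \<Longrightarrow> avoids P S i \<Longrightarrow> avoids P S j"

lemma avoids_not_mem: "avoids P S j \<Longrightarrow> j \<notin> S"
  by (induction rule: avoids.induct) auto

lemma avoids_imp_desc_path:
  "avoids P S j \<Longrightarrow> \<exists>xs. xs \<noteq> [] \<and> hd xs = j \<and>
     (\<forall>t. Suc t < length xs \<longrightarrow> covers P (xs ! t) (xs ! Suc t)) \<and> ht P (last xs) = 0 \<and> set xs \<inter> S = {}"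
proof (induction rule: avoids.induct)
  case (base j)
  then show ?case by (intro exI[of _ "[j]"]) auto
next
  case (step j i)
  then obtain xs where xs: "xs \<noteq> []" "hd xs = i" "\<forall>t. Suc t < length xs \<longrightarrow> covers P (xs ! t) (xs ! Suc t)"
    "ht P (last xs) = 0" "set xs \<inter> S = {}" by blast
  have "\<forall>t. Suc t < length (j # xs) \<longrightarrow> covers P ((j # xs) ! t) ((j # xs) ! Suc t)"
  proof (intro allI impI)
    fix t assume "Suc t < length (j # xs)"
    then show "covers P ((j # xs) ! t) ((j # xs) ! Suc t)"
      using xs step.hyps(2) by (cases t) (auto simp: hd_conv_nth)
  qed
  then show ?case using xs step.hyps(1) by (intro exI[of _ "j # xs"]) auto
qed

lemma desc_path_imp_avoids:
  "xs \<noteq> [] \<Longrightarrow> (\<forall>t. Suc t < length xs \<longrightarrow> covers P (xs ! t) (xs ! Suc t)) \<Longrightarrow>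
   ht P (last xs) = 0 \<Longrightarrow> set xs \<inter> S = {} \<Longrightarrow> avoids P S (hd xs)"
proof (induction xs)
  case (Cons a xs)
  show ?case
  proof (cases xs)
    case Nil
    then show ?thesis using Cons.prems by (auto intro: avoids.base)
  next
    case (Cons b ys)
    have path: "\<forall>t. Suc t < length xs \<longrightarrow> covers P (xs ! t) (xs ! Suc t)"
      using Cons.prems(2) by auto
    have "covers P a (hd xs)"
      using Cons.prems(2)[rule_format, of 0] Cons by simp
    moreover have "avoids P S (hd xs)"
      using Cons.IH[OF _ path] Cons Cons.prems by auto
    ultimately show ?thesis using Cons.prems by (auto intro: avoids.step)
  qed
qed simp

lemma gen_eq: "gen P S = {j \<in> verts P. \<not> avoids P S j}"
proof -
  have "(\<exists>xs. desc_path P xs \<and> hd xs = j \<and> set xs \<inter> S = {}) \<longleftrightarrow> avoids P S j"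
    if "j \<in> verts P" for j
    using avoids_imp_desc_path desc_path_imp_avoids that unfolding desc_path_def by blast
  then show ?thesis unfolding gen_def by blast
qed

lemma avoids_not_in_gen: "avoids P S j \<Longrightarrow> j \<notin> gen P S"
  by (simp add: gen_eq)

lemma gen_subset: "gen P S \<subseteq> verts P"
  by (auto simp: gen_eq)

lemma gen_supset: "S \<inter> verts P \<subseteq> gen P S"
  by (auto simp: gen_eq dest: avoids_not_mem)

lemma avoids_anti_mono: "avoids P S j \<Longrightarrow> S' \<subseteq> S \<Longrightarrow> avoids P S' j"
  by (induction rule: avoids.induct) (auto intro: avoids.intros)

text \<open>Restrictions of shrubs need not be shrubs, but keep these encoding invariants.\<close>

definition wf_shrub :: "shrub \<Rightarrow> bool" where
  "wf_shrub P \<longleftrightarrow> (\<forall>e\<in>edges P. \<exists>a b. a \<in> verts P \<and> b \<in> verts P \<and> a \<noteq> b \<and> e = {a, b})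
     \<and> (\<forall>n. n \<notin> verts P \<longrightarrow> ht P n = 0)"

lemma is_shrub_wf: "is_shrub P \<Longrightarrow> wf_shrub P"
  unfolding is_shrub_def wf_shrub_def by blast

lemma wf_shrub_edgeE:
  assumes "wf_shrub P" "e \<in> edges P"
  obtains a b where "a \<in> verts P" "b \<in> verts P" "a \<noteq> b" "e = {a, b}"
  using assms unfolding wf_shrub_def by blast

lemma wf_shrub_edge_verts:
  "wf_shrub P \<Longrightarrow> {a, b} \<in> edges P \<Longrightarrow> a \<in> verts P \<and> b \<in> verts P \<and> a \<noteq> b"
  by (erule wf_shrub_edgeE) (auto simp: doubleton_eq_iff)

lemma wf_shrub_edge_subset: "wf_shrub P \<Longrightarrow> e \<in> edges P \<Longrightarrow> e \<subseteq> verts P"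
  by (erule wf_shrub_edgeE) auto

lemma wf_shrub_edge_other:
  assumes "wf_shrub P" "e \<in> edges P" "v \<in> e"
  obtains j where "j \<in> verts P" "j \<noteq> v" "e = {j, v}"
  using assms by (elim wf_shrub_edgeE) (auto simp: insert_commute)

lemma covers_verts: "wf_shrub P \<Longrightarrow> covers P j i \<Longrightarrow> i \<in> verts P \<and> j \<in> verts P \<and> i \<noteq> j"
  unfolding covers_def using wf_shrub_edge_verts by blast

lemma covers_ht: "covers P j i \<Longrightarrow> ht P j = Suc (ht P i)"
  unfolding covers_def by simp

lemma shrub_finite: "is_shrub P \<Longrightarrow> finite (verts P)"
  unfolding is_shrub_def by simp

lemma shrub_nonempty: "is_shrub P \<Longrightarrow> verts P \<noteq> {}"
  unfolding is_shrub_def by simp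

lemma shrub_edge_ht:
  "is_shrub P \<Longrightarrow> {a, b} \<in> edges P \<Longrightarrow> ht P a = ht P b + 1 \<or> ht P b = ht P a + 1"
  unfolding is_shrub_def by blast

lemma shrub_covers_exists: "is_shrub P \<Longrightarrow> j \<in> verts P \<Longrightarrow> 0 < ht P j \<Longrightarrow> \<exists>i. covers P j i"
  unfolding is_shrub_def by blast

lemma shrub_square:
  "is_shrub P \<Longrightarrow> distinct [a, b, c, d] \<Longrightarrow> covers P a b \<Longrightarrow> covers P a c \<Longrightarrow> covers P c d \<Longrightarrow>
   {b, d} \<in> edges P"
  unfolding is_shrub_def by blast

lemma shrub_zigzag:
  "is_shrub P \<Longrightarrow> distinct [a, b, c, d, e] \<Longrightarrow> covers P a c \<Longrightarrow> covers P a d \<Longrightarrow>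
   covers P b d \<Longrightarrow> covers P b e \<Longrightarrow> {a, e} \<in> edges P \<or> {b, c} \<in> edges P"
  unfolding is_shrub_def by blast

lemma shrub_avoids_empty:
  assumes "is_shrub P" "j \<in> verts P"
  shows "avoids P {} j"
proof -
  have "\<forall>j\<in>verts P. ht P j = n \<longrightarrow> avoids P {} j" for n
  proof (induction n rule: less_induct)
    case (less n)
    show ?case
    proof (intro ballI impI)
      fix j assume j: "j \<in> verts P" "ht P j = n"
      show "avoids P {} j"
      proof (cases "n = 0")
        case False
        then obtain i where i: "covers P j i"
          using shrub_covers_exists[OF assms(1)] j by auto
        have "i \<in> verts P" "ht P i < n"
          using covers_verts[OF is_shrub_wf[OF assms(1)] i] covers_ht[OF i] j by auto
        then show ?thesis using less i by (auto intro: avoids.step)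
      qed (use j in \<open>auto intro: avoids.base\<close>)
    qed
  qed
  then show ?thesis using assms by blast
qed

lemma avoids_if_lowest:
  "avoids P {} z \<Longrightarrow> z \<notin> S \<Longrightarrow> \<forall>w\<in>S. ht P z \<le> ht P w \<Longrightarrow> avoids P S z"
proof (induction rule: avoids.induct)
  case (step j i)
  have "i \<notin> S" "\<forall>w\<in>S. ht P i \<le> ht P w"
    using step.prems covers_ht[OF step.hyps(2)] by force+
  then show ?case using step by (auto intro: avoids.step)
qed (auto intro: avoids.base)

lemma shrub_avoids_if_lowest:
  "is_shrub P \<Longrightarrow> z \<in> verts P \<Longrightarrow> z \<notin> S \<Longrightarrow> \<forall>w\<in>S. ht P z \<le> ht P w \<Longrightarrow> avoids P S z"
  using avoids_if_lowest shrub_avoids_empty by blast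

lemma gen_inter_verts: "wf_shrub P \<Longrightarrow> gen P S = gen P (S \<inter> verts P)"
proof -
  assume wf: "wf_shrub P"
  have "avoids P S j \<longleftrightarrow> avoids P (S \<inter> verts P) j" if "j \<in> verts P" for j
  proof
    assume "avoids P S j"
    then show "avoids P (S \<inter> verts P) j" by (rule avoids_anti_mono) auto
  next
    assume "avoids P (S \<inter> verts P) j"
    then show "avoids P S j" using that
    proof (induction rule: avoids.induct)
      case (step j i)
      then show ?case using covers_verts[OF wf step.hyps(2)] by (auto intro: avoids.step)
    qed (auto intro: avoids.base)
  qed
  then show ?thesis by (auto simp: gen_eq)
qed

lemma restrict_shrub_simps [simp]:
  "verts (restrict_shrub P X) = verts P \<inter> X"
  "edges (restrict_shrub P X) = {e \<in> edges P. e \<subseteq> X}"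
  "ht (restrict_shrub P X) n = (if n \<in> verts P \<inter> X then ht P n else 0)"
  by (simp_all add: restrict_shrub_def)

lemma wf_restrict_shrub: "wf_shrub P \<Longrightarrow> wf_shrub (restrict_shrub P X)"
  unfolding wf_shrub_def by simp (metis Int_iff insert_subset)

lemma covers_restrict_shrub:
  "wf_shrub P \<Longrightarrow> covers (restrict_shrub P X) a b \<longleftrightarrow> covers P a b \<and> a \<in> X \<and> b \<in> X"
  unfolding covers_def using wf_shrub_edge_verts[of P b a] by auto

lemma restrict_shrub_restrict_shrub:
  "restrict_shrub (restrict_shrub P X) Y = restrict_shrub P (X \<inter> Y)"
  by (simp add: restrict_shrub_def) (auto simp: fun_eq_iff)

lemma restrict_shrub_cong:
  "wf_shrub P \<Longrightarrow> verts P \<inter> X = verts P \<inter> Y \<Longrightarrow> restrict_shrub P X = restrict_shrub P Y"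
  unfolding restrict_shrub_def wf_shrub_def by (auto simp: fun_eq_iff)

lemma avoids_restrict_shrub_imp:
  "avoids (restrict_shrub P X) S j \<Longrightarrow> j \<in> verts P \<inter> X \<Longrightarrow> wf_shrub P \<Longrightarrow> avoids P S j"
proof (induction rule: avoids.induct)
  case (step j i)
  have "covers P j i" "i \<in> verts P \<inter> X"
    using covers_restrict_shrub[OF step.prems(2)] step.hyps(2) covers_verts[OF step.prems(2)] by auto
  then show ?case using step by (auto intro: avoids.step)
qed (auto intro: avoids.base)

lemma avoids_restrict_shrub:
  "avoids P S j \<Longrightarrow> wf_shrub P \<Longrightarrow> (\<forall>v\<in>verts P. avoids P S v \<longrightarrow> v \<in> X) \<Longrightarrow>
   avoids (restrict_shrub P X) S j"
proof (induction rule: avoids.induct)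
  case (step j i)
  have "covers (restrict_shrub P X) j i"
    using covers_restrict_shrub[OF step.prems(1)] step covers_verts[OF step.prems(1) step.hyps(2)]
    by (auto intro: avoids.step)
  then show ?case using step by (auto intro: avoids.step)
qed (auto intro: avoids.base)

definition del_vertex :: "shrub \<Rightarrow> nat \<Rightarrow> shrub" where
  "del_vertex P y = restrict_shrub P (verts P - {y})"

lemma verts_del_vertex [simp]: "verts (del_vertex P y) = verts P - {y}"
  by (auto simp: del_vertex_def)

lemma covers_del_vertex:
  "wf_shrub P \<Longrightarrow> covers (del_vertex P y) a b \<longleftrightarrow> covers P a b \<and> a \<noteq> y \<and> b \<noteq> y"
  unfolding del_vertex_def using covers_restrict_shrub covers_verts by blast

lemma card_del_vertex:
  assumes "finite (verts P)" "y \<in> verts P"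
  shows "card (verts (del_vertex P y)) < card (verts P)"
  unfolding verts_del_vertex using assms by (rule card_Diff1_less)

section \<open>Ramification classes\<close>

definition ram_class :: "shrub \<Rightarrow> nat \<Rightarrow> nat set" where
  "ram_class P w = {v. ramified P v \<and> below P v = below P w}"

lemma Ram_eq: "Ram P = ram_class P ` {w. ramified P w}"
  unfolding Ram_def ram_class_def by auto

lemma ramified_iff: "ramified P v \<longleftrightarrow> v \<in> verts P \<and> (\<exists>a\<in>below P v. \<exists>b\<in>below P v. a \<noteq> b)"
  unfolding ramified_def below_def by auto

lemma finite_Ram: "finite (verts P) \<Longrightarrow> finite (Ram P)"
proof -
  assume "finite (verts P)"
  moreover have "{w. ramified P w} \<subseteq> verts P"
    unfolding ramified_def by blast
  ultimately show ?thesis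
    unfolding Ram_eq using finite_subset by blast
qed

lemma rminus_ram_class: "ramified P w \<Longrightarrow> rminus P (ram_class P w) = below P w"
proof -
  assume "ramified P w"
  then have "below P ` ram_class P w = {below P w}"
    unfolding ram_class_def by auto
  then show ?thesis unfolding rminus_def by simp
qed

lemma below_subset_verts: "wf_shrub P \<Longrightarrow> below P w \<subseteq> verts P"
  unfolding below_def using covers_verts by blast

lemma finite_below: "wf_shrub P \<Longrightarrow> finite (verts P) \<Longrightarrow> finite (below P w)"
  using below_subset_verts finite_subset by blast

text \<open>The numerator of the factor of \<open>f\<^sub>P\<close> attached to a class \<open>r\<close> is not an empty sum.\<close>

lemma below_not_subset_gen_ram_class:
  assumes "is_shrub Q" "ramified Q w"
  shows "below Q w \<inter> (verts Q - gen Q (ram_class Q w)) \<noteq> {}"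
proof -
  obtain b where b: "covers Q w b"
    using assms(2) unfolding ramified_def by blast
  have bv: "b \<in> verts Q"
    using covers_verts[OF is_shrub_wf[OF assms(1)] b] by simp
  have "\<forall>v\<in>ram_class Q w. covers Q v b"
    using b unfolding ram_class_def below_def by auto
  then have "\<forall>v\<in>ram_class Q w. ht Q v = Suc (ht Q b)"
    using covers_ht by blast
  then have "avoids Q (ram_class Q w) b"
    by (intro shrub_avoids_if_lowest[OF assms(1) bv]) auto
  then show ?thesis
    using avoids_not_in_gen b bv unfolding below_def by blast
qed

section \<open>The substitution \<open>u\<^sub>x \<mapsto> u\<^sub>x + u\<^sub>y\<close>\<close>

definition split_subst :: "nat \<Rightarrow> nat \<Rightarrow> nat \<Rightarrow> rfun" where
  "split_subst x y = (\<lambda>n. if n = x then usum {x, y} else u n)"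

text \<open>Its effect on \<open>u[T]\<close>: \<open>u[T]\<close> becomes \<open>u[split_vars x y T]\<close>.\<close>

definition split_vars :: "nat \<Rightarrow> nat \<Rightarrow> nat set \<Rightarrow> nat set" where
  "split_vars x y T = (if x \<in> T then insert y T else T)"

lemma split_vars_id: "x \<notin> T \<Longrightarrow> split_vars x y T = T"
  by (simp add: split_vars_def)

lemma split_vars_iff: "y \<notin> B \<Longrightarrow> x \<noteq> y \<Longrightarrow> x \<in> split_vars x y B \<longleftrightarrow> y \<in> split_vars x y B"
  by (auto simp: split_vars_def)

lemma split_vars_inj: "y \<notin> B1 \<Longrightarrow> y \<notin> B2 \<Longrightarrow> split_vars x y B1 = split_vars x y B2 \<Longrightarrow> B1 = B2"
  unfolding split_vars_def by (auto split: if_splits)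

lemma split_vars_eq_pair: "y \<notin> B \<Longrightarrow> x \<noteq> y \<Longrightarrow> split_vars x y B = {x, y} \<longleftrightarrow> B = {x}"
  unfolding split_vars_def by auto

lemma gen_split_vars:
  "wf_shrub Q \<Longrightarrow> y \<notin> verts Q \<Longrightarrow> gen Q (split_vars x y B) = gen Q B"
  using gen_inter_verts[of Q B] gen_inter_verts[of Q "split_vars x y B"]
  by (simp add: split_vars_def)

lemma rsubst_split_usum:
  assumes "finite T" "y \<notin> T" "x \<noteq> y"
  shows "rsubst (split_subst x y) (usum T) = usum (split_vars x y T)"
proof (cases "x \<in> T")
  case True
  have "rsubst (split_subst x y) (usum T) = split_subst x y x + (\<Sum>k\<in>T - {x}. split_subst x y k)"
    using True assms(1) by (simp add: substitutable_usum sum.remove)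
  also have "\<dots> = u y + (u x + usum (T - {x}))"
    using assms(3) by (simp add: split_subst_def usum_def)
  also have "\<dots> = usum (split_vars x y T)"
    using True assms by (simp add: split_vars_def usum_def sum.remove)
  finally show ?thesis .
next
  case False
  have "rsubst (split_subst x y) (usum T) = (\<Sum>k\<in>T. split_subst x y k)"
    using assms(1) by (rule substitutable_usum(2))
  also have "\<dots> = usum (split_vars x y T)"
    using False by (auto simp: split_vars_def split_subst_def usum_def intro: sum.cong)
  finally show ?thesis .
qed

lemma split_subst_usum:
  assumes "finite T" "T \<noteq> {}" "y \<notin> T" "x \<noteq> y"
  shows "substitutable (split_subst x y) (usum T)"
    and "rsubst (split_subst x y) (usum T) = usum (split_vars x y T)"
    and "usum (split_vars x y T) \<noteq> 0"
  using assms substitutable_usum(1) rsubst_split_usum usum_nonzero[of "split_vars x y T"]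
  by (auto simp: split_vars_def)

lemma gen_Ram_nonempty:
  assumes Q: "is_shrub Q" and r: "r \<in> Ram Q"
  shows "gen Q (rminus Q r) \<noteq> {}" and "gen (restrict_shrub Q (verts Q - gen Q r)) (rminus Q r) \<noteq> {}"
proof -
  obtain w where w: "ramified Q w" "r = ram_class Q w"
    using r unfolding Ram_eq by blast
  have "rminus Q r = below Q w" "below Q w \<subseteq> verts Q" "below Q w \<noteq> {}"
    using rminus_ram_class[OF w(1)] w below_subset_verts[OF is_shrub_wf[OF Q]]
      ramified_iff[of Q w] by auto
  moreover have "below Q w \<inter> verts (restrict_shrub Q (verts Q - gen Q r)) \<noteq> {}"
    using below_not_subset_gen_ram_class[OF Q w(1)] w(2) below_subset_verts[OF is_shrub_wf[OF Q]]
    by auto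
  ultimately show "gen Q (rminus Q r) \<noteq> {}" "gen (restrict_shrub Q (verts Q - gen Q r)) (rminus Q r) \<noteq> {}"
    using gen_supset[of "rminus Q r" Q] gen_supset[of "rminus Q r" "restrict_shrub Q (verts Q - gen Q r)"]
    by auto
qed

lemma rsubst_split_f_shrub:
  assumes Q: "is_shrub Q" and y: "y \<notin> verts Q" and xy: "x \<noteq> y"
  shows "rsubst (split_subst x y) (f_shrub Q) =
     (1 / (\<Prod>i\<in>verts Q. usum (split_vars x y (gen Q {i})))) *
     (\<Prod>r\<in>Ram Q. usum (split_vars x y (gen (restrict_shrub Q (verts Q - gen Q r)) (rminus Q r)))
                / usum (split_vars x y (gen Q (rminus Q r))))"
proof -
  let ?g = "split_subst x y"
  let ?N = "\<lambda>r. usum (gen (restrict_shrub Q (verts Q - gen Q r)) (rminus Q r))"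
  let ?D = "\<lambda>r. usum (gen Q (rminus Q r))"
  have fin: "finite (verts Q)"
    using Q by (rule shrub_finite)
  have sum: "substitutable ?g (usum T)" "rsubst ?g (usum T) = usum (split_vars x y T)"
    "usum (split_vars x y T) \<noteq> 0"
    if "T \<subseteq> verts Q" "T \<noteq> {}" for T
    using split_subst_usum[of T y x] that fin y xy finite_subset by blast+
  have vert: "gen Q {i} \<subseteq> verts Q" "gen Q {i} \<noteq> {}" if "i \<in> verts Q" for i
    using gen_subset gen_supset[of "{i}" Q] that by blast+
  have ram: "gen Q (rminus Q r) \<subseteq> verts Q" "gen Q (rminus Q r) \<noteq> {}"
    "gen (restrict_shrub Q (verts Q - gen Q r)) (rminus Q r) \<subseteq> verts Q"
    "gen (restrict_shrub Q (verts Q - gen Q r)) (rminus Q r) \<noteq> {}"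
    if "r \<in> Ram Q" for r
    using gen_subset[of Q] gen_subset[of "restrict_shrub Q (verts Q - gen Q r)"]
      gen_Ram_nonempty[OF Q that] by auto
  have sub_verts: "substitutable ?g (\<Prod>i\<in>verts Q. usum (gen Q {i}))"
    "rsubst ?g (\<Prod>i\<in>verts Q. usum (gen Q {i})) = (\<Prod>i\<in>verts Q. usum (split_vars x y (gen Q {i})))"
    using substitutable_prod[OF fin, of ?g "\<lambda>i. usum (gen Q {i})"] sum[OF vert] by simp_all
  have "(\<Prod>i\<in>verts Q. usum (split_vars x y (gen Q {i}))) \<noteq> 0"
    using fin sum(3)[OF vert] by simp
  then have sub_inv: "substitutable ?g (1 / (\<Prod>i\<in>verts Q. usum (gen Q {i})))"
    "rsubst ?g (1 / (\<Prod>i\<in>verts Q. usum (gen Q {i}))) = 1 / (\<Prod>i\<in>verts Q. usum (split_vars x y (gen Q {i})))"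
    using substitutable_divide[OF substitutable_one sub_verts(1)] sub_verts(2) by (simp_all add: rsubst_one)
  have sub_ram: "substitutable ?g (?N r / ?D r)"
    "rsubst ?g (?N r / ?D r) = usum (split_vars x y (gen (restrict_shrub Q (verts Q - gen Q r)) (rminus Q r)))
                / usum (split_vars x y (gen Q (rminus Q r)))"
    if "r \<in> Ram Q" for r
    using substitutable_divide[OF sum(1)[OF ram(3,4)] sum(1)[OF ram(1,2)]] sum[OF ram(1,2)] sum[OF ram(3,4)] that
    by simp_all
  show ?thesis
    unfolding f_shrub_def
    using substitutable_mult[OF sub_inv(1) substitutable_prod(1)[OF finite_Ram[OF fin] sub_ram(1)]]
      sub_inv(2) substitutable_prod(2)[OF finite_Ram[OF fin] sub_ram(1)] sub_ram(2)
    by simp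
qed


section \<open>Removing a leaf\<close>

text \<open>\<open>leaf P x y\<close> means \<open>P = (P - y) \<circ>\<^sub>x [x \<triangleleft> y]\<close>.\<close>

definition leaf :: "shrub \<Rightarrow> nat \<Rightarrow> nat \<Rightarrow> bool" where
  "leaf P x y \<longleftrightarrow> x \<in> verts P \<and> y \<in> verts P \<and> x \<noteq> y \<and> {x, y} \<in> edges P \<and>
     ht P y = Suc (ht P x) \<and> (\<forall>e\<in>edges P. y \<in> e \<longrightarrow> e = {x, y})"

lemma leaf_restrict_shrub: "leaf P x y \<Longrightarrow> x \<in> X \<Longrightarrow> y \<in> X \<Longrightarrow> leaf (restrict_shrub P X) x y"
  unfolding leaf_def by auto

locale shrub_leaf =
  fixes P :: shrub and x y :: nat
  assumes wf: "wf_shrub P" and leaf: "leaf P x y"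
begin

lemma leaf_verts: "x \<in> verts P" "y \<in> verts P" "x \<noteq> y"
  using leaf unfolding leaf_def by auto

lemma edge_at_leaf: "e \<in> edges P \<Longrightarrow> y \<in> e \<Longrightarrow> e = {x, y}"
  using leaf unfolding leaf_def by blast

lemma not_covers_leaf: "\<not> covers P a y"
proof
  assume c: "covers P a y"
  then have "{y, a} = {x, y}"
    using edge_at_leaf unfolding covers_def by auto
  then have "a = x"
    using leaf_verts(3) by (auto simp: doubleton_eq_iff)
  then show False
    using c leaf covers_ht unfolding leaf_def by force
qed

lemma covers_from_leaf: "covers P y i \<longleftrightarrow> i = x"
proof
  assume "covers P y i"
  then have "{i, y} = {x, y}"
    using edge_at_leaf unfolding covers_def by auto
  then show "i = x"
    using leaf_verts(3) by (auto simp: doubleton_eq_iff)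
qed (use leaf in \<open>auto simp: leaf_def covers_def\<close>)

lemma avoids_insert_leaf: "avoids P S j \<Longrightarrow> j \<noteq> y \<Longrightarrow> avoids P (insert y S) j"
proof (induction rule: avoids.induct)
  case (step j i)
  then show ?case using not_covers_leaf by (auto intro: avoids.step)
qed (auto intro: avoids.base)

lemma avoids_del_leaf_iff:
  assumes "j \<in> verts P" "j \<noteq> y"
  shows "avoids (del_vertex P y) S j \<longleftrightarrow> avoids P S j"
proof
  show "avoids (del_vertex P y) S j \<Longrightarrow> avoids P S j"
    using avoids_restrict_shrub_imp wf assms unfolding del_vertex_def by blast
next
  assume "avoids P S j"
  then show "avoids (del_vertex P y) S j"
    using assms(2)
  proof (induction rule: avoids.induct)
    case (step j i)
    then have "i \<noteq> y"
      using not_covers_leaf by blast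
    then show ?case
      using step covers_del_vertex[OF wf] by (auto intro: avoids.step)
  qed (auto intro: avoids.base simp: del_vertex_def)
qed

lemma avoids_leaf_iff: "avoids P S y \<longleftrightarrow> y \<notin> S \<and> avoids P S x"
proof
  assume "avoids P S y"
  then show "y \<notin> S \<and> avoids P S x"
    by (cases rule: avoids.cases) (use leaf covers_from_leaf in \<open>auto simp: leaf_def\<close>)
qed (use covers_from_leaf in \<open>auto intro: avoids.step\<close>)

lemma gen_leaf: "y \<notin> S \<Longrightarrow> gen P S = split_vars x y (gen (del_vertex P y) S)"
  using avoids_del_leaf_iff avoids_leaf_iff leaf_verts gen_subset[of "del_vertex P y" S]
  by (auto simp: gen_eq split_vars_def)

lemma gen_leaf_singleton: "is_shrub P \<Longrightarrow> gen P {y} = {y}"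
  using avoids_insert_leaf[OF shrub_avoids_empty] avoids_not_in_gen gen_supset[of "{y}" P]
    gen_subset[of P "{y}"] leaf_verts
  by blast

lemma below_del_leaf: "v \<noteq> y \<Longrightarrow> below (del_vertex P y) v = below P v"
  unfolding below_def using covers_del_vertex[OF wf] not_covers_leaf by blast

lemma not_ramified_leaf: "\<not> ramified P y"
  by (auto simp: ramified_def covers_from_leaf)

lemma ramified_del_leaf_iff: "ramified (del_vertex P y) v \<longleftrightarrow> ramified P v"
  using below_del_leaf not_ramified_leaf
  by (cases "v = y") (auto simp: ramified_iff)

lemma ram_class_del_leaf: "ramified P w \<Longrightarrow> ram_class (del_vertex P y) w = ram_class P w"
  using not_ramified_leaf ramified_del_leaf_iff below_del_leaf
  unfolding ram_class_def by (metis (lifting))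

lemma Ram_del_leaf: "Ram (del_vertex P y) = Ram P"
  unfolding Ram_eq ramified_del_leaf_iff using ram_class_del_leaf by simp

lemma rminus_del_leaf:
  assumes "r \<in> Ram P"
  shows "rminus (del_vertex P y) r = rminus P r" "y \<notin> rminus P r" "y \<notin> r"
proof -
  obtain w where w: "ramified P w" "r = ram_class P w"
    using assms unfolding Ram_eq by blast
  have "w \<noteq> y"
    using w(1) not_ramified_leaf by blast
  then show "rminus (del_vertex P y) r = rminus P r"
    using rminus_ram_class w ram_class_del_leaf below_del_leaf ramified_del_leaf_iff by metis
  show "y \<notin> rminus P r"
    using rminus_ram_class[OF w(1)] w(2) not_covers_leaf unfolding below_def by blast
  show "y \<notin> r"
    using w not_ramified_leaf unfolding ram_class_def by blast
qed

lemma gen_restrict_leaf: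
  assumes "y \<notin> S" "y \<notin> B"
  shows "gen (restrict_shrub P (verts P - gen P S)) B =
    split_vars x y (gen (restrict_shrub (del_vertex P y) (verts P - {y} - gen (del_vertex P y) S)) B)"
proof -
  define G where "G = gen (del_vertex P y) S"
  have gen_S: "gen P S = split_vars x y G"
    unfolding G_def using assms(1) by (rule gen_leaf)
  have G: "G \<subseteq> verts P - {y}"
    unfolding G_def using gen_subset by fastforce
  have restrict_del: "restrict_shrub (del_vertex P y) (verts P - {y} - G) = restrict_shrub P (verts P - insert y G)"
    unfolding del_vertex_def restrict_shrub_restrict_shrub
    by (rule restrict_shrub_cong[OF wf]) auto
  show ?thesis
  proof (cases "x \<in> G")
    case True
    have "restrict_shrub P (verts P - gen P S) = restrict_shrub (del_vertex P y) (verts P - {y} - G)"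
      unfolding restrict_del gen_S using True by (simp add: split_vars_def)
    moreover have "x \<notin> gen (restrict_shrub (del_vertex P y) (verts P - {y} - G)) B"
      using gen_subset True by fastforce
    ultimately show ?thesis
      by (simp add: G_def split_vars_id)
  next
    case False
    interpret R: shrub_leaf "restrict_shrub P (verts P - G)" x y
      using False G leaf_verts by unfold_locales (auto intro: wf_restrict_shrub wf leaf_restrict_shrub leaf)
    have "del_vertex (restrict_shrub P (verts P - G)) y = restrict_shrub P (verts P - insert y G)"
      unfolding del_vertex_def restrict_shrub_restrict_shrub
      by (rule restrict_shrub_cong[OF wf]) auto
    then show ?thesis
      using R.gen_leaf[OF assms(2)] gen_S False restrict_del by (simp add: split_vars_id G_def)
  qed
qed

lemma f_shrub_leaf:
  assumes P: "is_shrub P" and P': "is_shrub (del_vertex P y)"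
  shows "f_shrub P = 1 / u y * rsubst (split_subst x y) (f_shrub (del_vertex P y))"
proof -
  let ?P' = "del_vertex P y"
  have fin: "finite (verts P)"
    using P by (rule shrub_finite)
  have prod_verts: "(\<Prod>i\<in>verts P. usum (gen P {i})) = u y * (\<Prod>i\<in>verts ?P'. usum (split_vars x y (gen ?P' {i})))"
  proof -
    have "(\<Prod>i\<in>verts P. usum (gen P {i})) = usum (gen P {y}) * (\<Prod>i\<in>verts P - {y}. usum (gen P {i}))"
      by (rule prod.remove[OF fin leaf_verts(2)])
    then show ?thesis
      using gen_leaf_singleton[OF P] gen_leaf by (simp add: usum_def)
  qed
  have prod_Ram: "(\<Prod>r\<in>Ram P. usum (gen (restrict_shrub P (verts P - gen P r)) (rminus P r)) / usum (gen P (rminus P r))) =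
     (\<Prod>r\<in>Ram ?P'. usum (split_vars x y (gen (restrict_shrub ?P' (verts ?P' - gen ?P' r)) (rminus ?P' r)))
                  / usum (split_vars x y (gen ?P' (rminus ?P' r))))"
    unfolding Ram_del_leaf
  proof (rule prod.cong)
    fix r assume r: "r \<in> Ram P"
    show "usum (gen (restrict_shrub P (verts P - gen P r)) (rminus P r)) / usum (gen P (rminus P r)) =
      usum (split_vars x y (gen (restrict_shrub ?P' (verts ?P' - gen ?P' r)) (rminus ?P' r)))
        / usum (split_vars x y (gen ?P' (rminus ?P' r)))"
      using gen_restrict_leaf[OF rminus_del_leaf(3,2)[OF r]] gen_leaf[OF rminus_del_leaf(2)[OF r]]
      by (simp add: rminus_del_leaf(1)[OF r])
  qed simp
  have "y \<notin> verts ?P'"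
    by simp
  note rsubst_f = rsubst_split_f_shrub[OF P' this leaf_verts(3)]
  show ?thesis
    unfolding rsubst_f unfolding f_shrub_def prod_verts prod_Ram by simp
qed

end


section \<open>Removing one of two twins\<close>

text \<open>\<open>twin P x y\<close> means \<open>P = (P - y) \<circ>\<^sub>x [x][y]\<close>.\<close>

definition twin :: "shrub \<Rightarrow> nat \<Rightarrow> nat \<Rightarrow> bool" where
  "twin P x y \<longleftrightarrow> x \<in> verts P \<and> y \<in> verts P \<and> x \<noteq> y \<and> ht P x = ht P y \<and> {x, y} \<notin> edges P \<and>
     (\<forall>v. v \<noteq> x \<longrightarrow> v \<noteq> y \<longrightarrow> ({v, x} \<in> edges P \<longleftrightarrow> {v, y} \<in> edges P))"

lemma twin_sym: "twin P x y \<Longrightarrow> twin P y x"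
  unfolding twin_def by (auto simp: insert_commute)

lemma twin_restrict_shrub: "twin P x y \<Longrightarrow> x \<in> X \<Longrightarrow> y \<in> X \<Longrightarrow> twin (restrict_shrub P X) x y"
  unfolding twin_def by auto

text \<open>The vertices covering exactly the two twins; in \<open>P - y\<close> they cover only \<open>x\<close>, so they
  form the one class of \<open>Ram P\<close> that does not come from \<open>Ram (P - y)\<close>.\<close>

definition twin_parents :: "shrub \<Rightarrow> nat \<Rightarrow> nat \<Rightarrow> nat set" where
  "twin_parents P x y = {v \<in> verts P. below P v = {x, y}}"

definition merge_twin :: "nat \<Rightarrow> nat \<Rightarrow> nat \<Rightarrow> nat" where
  "merge_twin x y v = (if v = y then x else v)"

locale shrub_twin =
  fixes P :: shrub and x y :: nat
  assumes wf: "wf_shrub P" and twin: "twin P x y"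
begin

lemma twin_verts: "x \<in> verts P" "y \<in> verts P" "x \<noteq> y"
  using twin unfolding twin_def by auto

lemma twin_ht: "ht P x = ht P y"
  using twin unfolding twin_def by simp

lemma covers_twin_iff: "v \<noteq> x \<Longrightarrow> v \<noteq> y \<Longrightarrow> covers P v x \<longleftrightarrow> covers P v y"
  using twin unfolding covers_def twin_def by (simp add: insert_commute)

lemma covered_by_twin_iff: "v \<noteq> x \<Longrightarrow> v \<noteq> y \<Longrightarrow> covers P x v \<longleftrightarrow> covers P y v"
  using twin unfolding covers_def twin_def by simp

lemma not_covers_twins: "\<not> covers P x y" "\<not> covers P y x" "\<not> covers P x x" "\<not> covers P y y"
  using covers_ht[of P x y] covers_ht[of P y x] covers_ht[of P x x] covers_ht[of P y y] twin_ht
  by auto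

lemma avoids_del_twin:
  "avoids P S j \<Longrightarrow> (x \<in> S \<longleftrightarrow> y \<in> S) \<Longrightarrow> j \<in> verts P \<Longrightarrow>
   avoids (del_vertex P y) S (merge_twin x y j)"
proof (induction rule: avoids.induct)
  case (base j)
  then show ?case
    using twin_ht twin_verts by (auto intro!: avoids.base simp: merge_twin_def del_vertex_def)
next
  case (step j i)
  have hi: "ht P j = Suc (ht P i)"
    using covers_ht[OF step.hyps(2)] .
  have c: "covers P (merge_twin x y j) (merge_twin x y i)"
  proof (cases "i = y")
    case True
    then have "j \<noteq> x" "j \<noteq> y"
      using hi twin_ht by auto
    then show ?thesis
      using covers_twin_iff step.hyps(2) True by (simp add: merge_twin_def)
  next
    case False
    moreover have "i \<noteq> x" if "j = y"
      using hi twin_ht that by auto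
    ultimately show ?thesis
      using covered_by_twin_iff step.hyps(2) by (auto simp: merge_twin_def)
  qed
  have "merge_twin x y j \<noteq> y" "merge_twin x y i \<noteq> y" "merge_twin x y j \<notin> S"
    using twin_verts step.hyps(1) step.prems by (auto simp: merge_twin_def)
  moreover have "avoids (del_vertex P y) S (merge_twin x y i)"
    using step.IH step.prems(1) covers_verts[OF wf step.hyps(2)] by blast
  ultimately show ?case
    using c covers_del_vertex[OF wf] by (auto intro: avoids.step)
qed

lemma avoids_of_del_twin:
  "avoids (del_vertex P y) S k \<Longrightarrow> (x \<in> S \<longleftrightarrow> y \<in> S) \<Longrightarrow> j \<in> verts P \<Longrightarrow> merge_twin x y j = k \<Longrightarrow>
   avoids P S j"
proof (induction arbitrary: j rule: avoids.induct)
  case (base k)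
  then have "k \<in> verts P" "k \<noteq> y"
    using twin_verts by (auto simp: merge_twin_def split: if_splits)
  then show ?case
    using base twin_ht by (auto intro!: avoids.base simp: merge_twin_def del_vertex_def split: if_splits)
next
  case (step k i)
  have c: "covers P k i" "i \<noteq> y" "k \<noteq> y" "i \<in> verts P"
    using step.hyps(2) covers_del_vertex[OF wf] covers_verts[OF wf] by auto
  have "avoids P S i"
    using step.IH[OF step.prems(1) c(4)] c(2) by (simp add: merge_twin_def)
  moreover have "covers P j i"
    using step.prems c covered_by_twin_iff covers_verts[OF wf c(1)]
    by (cases "j = y") (auto simp: merge_twin_def)
  moreover have "j \<notin> S"
    using step.hyps(1) step.prems by (auto simp: merge_twin_def split: if_splits)
  ultimately show ?case by (auto intro: avoids.step)
qed

lemma gen_twin: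
  assumes S: "x \<in> S \<longleftrightarrow> y \<in> S"
  shows "gen P S = split_vars x y (gen (del_vertex P y) S)"
proof -
  have y: "y \<notin> gen (del_vertex P y) S"
    using gen_subset[of "del_vertex P y" S] by auto
  have "avoids P S j \<longleftrightarrow> avoids (del_vertex P y) S (merge_twin x y j)" if "j \<in> verts P" for j
    using avoids_del_twin[OF _ S that] avoids_of_del_twin[OF _ S that refl] by blast
  then have "j \<in> gen P S \<longleftrightarrow> j \<in> verts P \<and> merge_twin x y j \<in> gen (del_vertex P y) S" for j
    using twin_verts by (auto simp: gen_eq merge_twin_def)
  then show ?thesis
    using y twin_verts gen_subset[of "del_vertex P y" S]
    by (auto simp: split_vars_def merge_twin_def split: if_splits)
qed

lemma gen_twin_singleton:
  assumes P: "is_shrub P"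
  shows "gen P {x} = {x}"
proof -
  have py: "avoids P {x} y"
    using shrub_avoids_if_lowest[OF P twin_verts(2)] twin_verts twin_ht by simp
  have "avoids P {x} j" if "avoids P {} j" "j \<noteq> x" for j
    using that
  proof (induction rule: avoids.induct)
    case (step j i)
    show ?case
    proof (cases "i = x")
      case True
      then have "j \<noteq> y"
        using covers_ht[OF step.hyps(2)] twin_ht by auto
      then have "covers P j y"
        using covers_twin_iff step.prems step.hyps(2) True by simp
      then show ?thesis using py step.prems by (auto intro: avoids.step)
    qed (use step in \<open>auto intro: avoids.step\<close>)
  qed (auto intro: avoids.base)
  then have "j \<notin> gen P {x}" if "j \<in> verts P" "j \<noteq> x" for j
    using that shrub_avoids_empty[OF P] avoids_not_in_gen by blast
  moreover have "x \<in> gen P {x}"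
    using gen_supset[of "{x}" P] twin_verts by blast
  ultimately show ?thesis
    using gen_subset[of P "{x}"] by blast
qed

lemma twin_parents_ht: "v \<in> twin_parents P x y \<Longrightarrow> ht P v = Suc (ht P x)"
  unfolding twin_parents_def below_def using covers_ht by auto

text \<open>A vertex covering both twins but outside \<open>twin_parents\<close> covers a third vertex,
  through which a path escapes.\<close>

lemma avoids_twin_parents:
  assumes P: "is_shrub P"
  shows "avoids P (twin_parents P x y) j \<Longrightarrow> j \<notin> {x, y} \<Longrightarrow>
    avoids P (twin_parents P x y \<union> {x, y}) j"
proof (induction rule: avoids.induct)
  case (step j i)
  show ?case
  proof (cases "i \<in> {x, y}")
    case True
    have hj: "ht P j = Suc (ht P x)"
      using covers_ht[OF step.hyps(2)] True twin_ht by auto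
    then have "j \<noteq> x" "j \<noteq> y"
      using twin_ht by auto
    then have "covers P j x" "covers P j y"
      using covers_twin_iff step.hyps(2) True by auto
    moreover have "j \<in> verts P"
      using covers_verts[OF wf step.hyps(2)] by simp
    ultimately obtain z where z: "covers P j z" "z \<notin> {x, y}"
      using step.hyps(1) unfolding twin_parents_def below_def by blast
    have hz: "ht P z = ht P x" and zv: "z \<in> verts P"
      using covers_ht[OF z(1)] hj covers_verts[OF wf z(1)] by auto
    have "z \<notin> twin_parents P x y \<union> {x, y}"
      using z(2) twin_parents_ht hz by fastforce
    moreover have "\<forall>w\<in>twin_parents P x y \<union> {x, y}. ht P z \<le> ht P w"
      using twin_parents_ht hz twin_ht by auto
    ultimately have "avoids P (twin_parents P x y \<union> {x, y}) z"
      by (rule shrub_avoids_if_lowest[OF P zv])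
    then show ?thesis
      using z(1) step.hyps(1) \<open>j \<noteq> x\<close> \<open>j \<noteq> y\<close> by (auto intro: avoids.step)
  qed (use step in \<open>auto intro: avoids.step\<close>)
qed (auto intro: avoids.base)

lemma covers_del_twin: "covers (del_vertex P y) a b \<longleftrightarrow> covers P a b \<and> a \<noteq> y \<and> b \<noteq> y"
  using covers_del_vertex[OF wf] .

lemma below_del_twin: "y \<notin> below (del_vertex P y) v"
  unfolding below_def covers_del_twin by simp

lemma below_twin:
  assumes "v \<noteq> y"
  shows "below P v = split_vars x y (below (del_vertex P y) v)"
proof -
  have below_del: "below (del_vertex P y) v = {i. covers P v i \<and> i \<noteq> y}"
    unfolding below_def covers_del_twin using assms by simp
  have "covers P v y \<longleftrightarrow> covers P v x"
    using covers_twin_iff[OF _ assms] not_covers_twins by (cases "v = x") auto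
  then show ?thesis
    unfolding below_del unfolding split_vars_def below_def using twin_verts(3) by auto
qed

lemma below_twin_x: "below P x = below (del_vertex P y) x"
  using below_twin[OF twin_verts(3)] not_covers_twins(3) below_del_twin
  unfolding split_vars_def below_def by (auto split: if_splits)

lemma below_twin_y: "below P y = below (del_vertex P y) x"
proof -
  have "covers P y i \<longleftrightarrow> covers P x i" for i
    using covered_by_twin_iff[of i] not_covers_twins by (cases "i = x \<or> i = y") auto
  then show ?thesis
    using below_twin_x unfolding below_def by auto
qed

lemma ramified_twin_iff:
  assumes "v \<noteq> y"
  shows "ramified P v \<longleftrightarrow> ramified (del_vertex P y) v \<or> (v \<in> verts P \<and> x \<in> below (del_vertex P y) v)"
proof -
  define B where "B = below (del_vertex P y) v"
  have "y \<notin> B"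
    unfolding B_def by (rule below_del_twin)
  then have "(\<exists>a\<in>split_vars x y B. \<exists>b\<in>split_vars x y B. a \<noteq> b) \<longleftrightarrow> (\<exists>a\<in>B. \<exists>b\<in>B. a \<noteq> b) \<or> x \<in> B"
    using twin_verts(3) unfolding split_vars_def by auto
  moreover have "v \<in> verts (del_vertex P y) \<longleftrightarrow> v \<in> verts P"
    using assms by simp
  ultimately show ?thesis
    unfolding ramified_iff below_twin[OF assms] B_def[symmetric] by blast
qed

lemma ramified_twin_y: "ramified P y \<longleftrightarrow> ramified (del_vertex P y) x"
  unfolding ramified_iff below_twin_y using twin_verts by simp

lemma ramified_del_twin: "ramified (del_vertex P y) v \<Longrightarrow> v \<noteq> y \<and> v \<in> verts P"
  unfolding ramified_def verts_del_vertex by blast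

lemma ram_class_twin:
  assumes r: "ramified (del_vertex P y) w"
  shows "ram_class P w = split_vars x y (ram_class (del_vertex P y) w)"
proof -
  have wy: "w \<noteq> y"
    using ramified_del_twin[OF r] by simp
  have bw: "below P w = split_vars x y (below (del_vertex P y) w)"
    using below_twin[OF wy] .
  have same_below: "below P v = below P w \<longleftrightarrow> below (del_vertex P y) v' = below (del_vertex P y) w"
    if "below P v = split_vars x y (below (del_vertex P y) v')" for v v'
  proof
    assume "below P v = below P w"
    then show "below (del_vertex P y) v' = below (del_vertex P y) w"
      using that bw split_vars_inj[OF below_del_twin below_del_twin] by metis
  qed (use that bw in simp)
  have yc: "y \<notin> ram_class (del_vertex P y) w"
    unfolding ram_class_def using ramified_del_twin by blast
  have "v \<in> ram_class P w \<longleftrightarrow> v \<in> split_vars x y (ram_class (del_vertex P y) w)" for v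
  proof (cases "v = y")
    case True
    have "x \<notin> below (del_vertex P y) x"
      unfolding below_def covers_del_twin using not_covers_twins(3) by simp
    then have "below P y = split_vars x y (below (del_vertex P y) x)"
      using below_twin_y by (simp add: split_vars_id)
    then have "y \<in> ram_class P w \<longleftrightarrow> ramified (del_vertex P y) x \<and> below (del_vertex P y) x = below (del_vertex P y) w"
      unfolding ram_class_def using ramified_twin_y same_below by simp
    also have "\<dots> \<longleftrightarrow> x \<in> ram_class (del_vertex P y) w"
      unfolding ram_class_def by simp
    finally show ?thesis
      using True yc twin_verts(3) by (auto simp: split_vars_def)
  next
    case False
    have "v \<in> ram_class P w \<longleftrightarrow> ramified P v \<and> below (del_vertex P y) v = below (del_vertex P y) w"
      unfolding ram_class_def using same_below[OF below_twin[OF False]] by simp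
    also have "\<dots> \<longleftrightarrow> ramified (del_vertex P y) v \<and> below (del_vertex P y) v = below (del_vertex P y) w"
      using ramified_twin_iff[OF False] r False unfolding ramified_iff[of "del_vertex P y"] by auto
    also have "\<dots> \<longleftrightarrow> v \<in> ram_class (del_vertex P y) w"
      unfolding ram_class_def by simp
    finally show ?thesis
      using False by (auto simp: split_vars_def)
  qed
  then show ?thesis by blast
qed

lemma twin_parents_eq: "twin_parents P x y = {v \<in> verts P. v \<noteq> y \<and> below (del_vertex P y) v = {x}}"
proof (rule set_eqI)
  fix v
  show "v \<in> twin_parents P x y \<longleftrightarrow> v \<in> {v \<in> verts P. v \<noteq> y \<and> below (del_vertex P y) v = {x}}"
  proof (cases "v = y")
    case True
    have "y \<notin> below P y"
      unfolding below_twin_y using below_del_twin by simp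
    then show ?thesis
      using True unfolding twin_parents_def by auto
  next
    case False
    have "below P v = {x, y} \<longleftrightarrow> below (del_vertex P y) v = {x}"
      unfolding below_twin[OF False] by (rule split_vars_eq_pair[OF below_del_twin twin_verts(3)])
    then show ?thesis
      using False unfolding twin_parents_def by simp
  qed
qed

lemma ram_class_twin_parents:
  assumes "a \<in> twin_parents P x y"
  shows "ram_class P a = twin_parents P x y"
proof -
  have "below P a = {x, y}"
    using assms unfolding twin_parents_def by auto
  then show ?thesis
    unfolding ram_class_def twin_parents_def ramified_iff using twin_verts(3) by auto
qed

lemma ramified_twin_parents: "a \<in> twin_parents P x y \<Longrightarrow> ramified P a"
  unfolding twin_parents_def ramified_iff using twin_verts(3) by auto

lemma not_ramified_del_twin_parents: "a \<in> twin_parents P x y \<Longrightarrow> \<not> ramified (del_vertex P y) a"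
  unfolding twin_parents_eq ramified_iff by auto

lemma Ram_twin:
  "Ram P = split_vars x y ` Ram (del_vertex P y) \<union> (if twin_parents P x y = {} then {} else {twin_parents P x y})"
  (is "_ = ?R")
proof (intro equalityI subsetI)
  fix r assume "r \<in> Ram P"
  then obtain w where w: "ramified P w" "r = ram_class P w"
    unfolding Ram_eq by blast
  show "r \<in> ?R"
  proof (cases "w = y")
    case True
    have "ramified (del_vertex P y) x"
      using ramified_twin_y w True by simp
    moreover have "ram_class P y = ram_class P x"
      unfolding ram_class_def below_twin_y below_twin_x by simp
    ultimately show ?thesis
      using ram_class_twin w True unfolding Ram_eq by auto
  next
    case False
    show ?thesis
    proof (cases "ramified (del_vertex P y) w")
      case True
      then show ?thesis using ram_class_twin w unfolding Ram_eq by blast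
    next
      case nr: False
      then have "w \<in> twin_parents P x y"
        unfolding twin_parents_eq using ramified_twin_iff[OF False] w False
        unfolding ramified_iff by auto
      then show ?thesis using ram_class_twin_parents w by auto
    qed
  qed
next
  fix r assume "r \<in> ?R"
  then show "r \<in> Ram P"
  proof (elim UnE)
    assume "r \<in> split_vars x y ` Ram (del_vertex P y)"
    then obtain w where w: "ramified (del_vertex P y) w" "r = split_vars x y (ram_class (del_vertex P y) w)"
      unfolding Ram_eq by blast
    then have "ramified P w"
      using ramified_twin_iff ramified_del_twin by blast
    then show ?thesis using ram_class_twin w unfolding Ram_eq by blast
  next
    assume "r \<in> (if twin_parents P x y = {} then {} else {twin_parents P x y})"
    then obtain a where "a \<in> twin_parents P x y" "r = twin_parents P x y"
      by (auto split: if_splits)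
    then show ?thesis using ram_class_twin_parents ramified_twin_parents unfolding Ram_eq by blast
  qed
qed

lemma not_mem_Ram_del_twin: "r \<in> Ram (del_vertex P y) \<Longrightarrow> y \<notin> r"
  unfolding Ram_eq ram_class_def using ramified_del_twin by blast

lemma inj_on_split_vars_Ram: "inj_on (split_vars x y) (Ram (del_vertex P y))"
  by (rule inj_onI) (use split_vars_inj not_mem_Ram_del_twin in blast)

lemma twin_parents_not_in_Ram_del:
  "twin_parents P x y \<noteq> {} \<Longrightarrow> twin_parents P x y \<notin> split_vars x y ` Ram (del_vertex P y)"
proof
  assume "twin_parents P x y \<in> split_vars x y ` Ram (del_vertex P y)"
  then obtain w where w: "ramified (del_vertex P y) w"
    "twin_parents P x y = split_vars x y (ram_class (del_vertex P y) w)"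
    unfolding Ram_eq by blast
  then have "w \<in> twin_parents P x y"
    unfolding ram_class_def by (auto simp: split_vars_def)
  then show False
    using not_ramified_del_twin_parents w(1) by blast
qed

lemma rminus_twin:
  assumes "r \<in> Ram (del_vertex P y)"
  shows "rminus P (split_vars x y r) = split_vars x y (rminus (del_vertex P y) r)"
    and "y \<notin> rminus (del_vertex P y) r"
proof -
  obtain w where w: "ramified (del_vertex P y) w" "r = ram_class (del_vertex P y) w"
    using assms unfolding Ram_eq by blast
  have "w \<noteq> y" "ramified P w"
    using ramified_del_twin[OF w(1)] ramified_twin_iff w(1) by auto
  then show "rminus P (split_vars x y r) = split_vars x y (rminus (del_vertex P y) r)"
    using rminus_ram_class[OF \<open>ramified P w\<close>] rminus_ram_class[OF w(1)] ram_class_twin[OF w(1)]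
      below_twin w(2) by simp
  show "y \<notin> rminus (del_vertex P y) r"
    using rminus_ram_class[OF w(1)] w(2) below_del_twin by simp
qed

lemma rminus_twin_parents:
  assumes "twin_parents P x y \<noteq> {}"
  shows "rminus P (twin_parents P x y) = {x, y}"
proof -
  obtain a where a: "a \<in> twin_parents P x y"
    using assms by blast
  then have "rminus P (twin_parents P x y) = below P a"
    using rminus_ram_class[OF ramified_twin_parents[OF a]] ram_class_twin_parents[OF a] by simp
  then show ?thesis
    using a unfolding twin_parents_def by simp
qed

end


lemma prod_image_Un_optional:
  assumes "finite R" "inj_on g R" "A \<noteq> {} \<Longrightarrow> A \<notin> g ` R"
  shows "(\<Prod>r\<in>g ` R \<union> (if A = {} then {} else {A}). F r) =
         (\<Prod>r\<in>R. F (g r)) * (if A = {} then 1 else F A)"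
proof (cases "A = {}")
  case False
  then have "(\<Prod>r\<in>g ` R \<union> {A}. F r) = (\<Prod>r\<in>g ` R. F r) * F A"
    using assms(1,3) by (simp add: prod.union_disjoint mult.commute)
  then show ?thesis
    using False prod.reindex[OF assms(2), of F] by (simp add: comp_def)
qed (use prod.reindex[OF assms(2)] in simp)

context shrub_twin
begin

lemma gen_twin_split_vars:
  "y \<notin> B \<Longrightarrow> gen P (split_vars x y B) = split_vars x y (gen (del_vertex P y) B)"
  using gen_twin[OF split_vars_iff[OF _ twin_verts(3)]]
    gen_split_vars[OF wf_restrict_shrub[OF wf], of y "verts P - {y}" x]
  by (simp add: del_vertex_def)

lemma gen_restrict_twin:
  assumes "y \<notin> S" "y \<notin> B"
  shows "gen (restrict_shrub P (verts P - gen P (split_vars x y S))) (split_vars x y B) =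
    split_vars x y (gen (restrict_shrub (del_vertex P y) (verts P - {y} - gen (del_vertex P y) S)) B)"
proof -
  define G where "G = gen (del_vertex P y) S"
  let ?R' = "restrict_shrub (del_vertex P y) (verts P - {y} - G)"
  have gen_S: "gen P (split_vars x y S) = split_vars x y G"
    unfolding G_def using assms(1) by (rule gen_twin_split_vars)
  have G: "G \<subseteq> verts P - {y}"
    unfolding G_def using gen_subset[of "del_vertex P y" S] by simp
  have wf_R': "wf_shrub ?R'" "y \<notin> verts ?R'"
    using wf_restrict_shrub[OF wf_restrict_shrub[OF wf]] unfolding del_vertex_def by auto
  have restrict_del: "?R' = restrict_shrub P (verts P - insert y G)"
    unfolding del_vertex_def restrict_shrub_restrict_shrub
    by (rule restrict_shrub_cong[OF wf]) auto
  show ?thesis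
  proof (cases "x \<in> G")
    case True
    have "restrict_shrub P (verts P - gen P (split_vars x y S)) = ?R'"
      unfolding restrict_del gen_S using True by (simp add: split_vars_def)
    moreover have "x \<notin> gen ?R' B"
      using gen_subset[of ?R' B] True by auto
    ultimately show ?thesis
      using gen_split_vars[OF wf_R'] by (simp add: G_def split_vars_id)
  next
    case False
    interpret R: shrub_twin "restrict_shrub P (verts P - G)" x y
      using False G twin_verts by unfold_locales (auto intro: wf_restrict_shrub wf twin_restrict_shrub twin)
    have "del_vertex (restrict_shrub P (verts P - G)) y = ?R'"
      unfolding restrict_del del_vertex_def restrict_shrub_restrict_shrub
      by (rule restrict_shrub_cong[OF wf]) auto
    then show ?thesis
      using R.gen_twin_split_vars[OF assms(2)] gen_S False by (simp add: split_vars_id G_def)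
  qed
qed

lemma gen_twin_pair: "gen P {x, y} = split_vars x y (gen (del_vertex P y) {x})"
  using gen_twin_split_vars[of "{x}"] twin_verts(3) by (simp add: split_vars_def insert_commute)

lemma twin_parents_not_twin:
  assumes "v \<in> twin_parents P x y"
  shows "v \<noteq> x" "v \<noteq> y"
proof -
  have "ht P v = Suc (ht P x)"
    using assms by (rule twin_parents_ht)
  then show "v \<noteq> x" "v \<noteq> y"
    using twin_ht by auto
qed

lemma gen_restrict_twin_parents:
  assumes P: "is_shrub P"
  shows "gen (restrict_shrub P (verts P - gen P (twin_parents P x y))) {x, y} = {x, y}"
proof -
  let ?A = "twin_parents P x y"
  let ?R = "restrict_shrub P (verts P - gen P ?A)"
  have "\<forall>w\<in>?A. ht P x \<le> ht P w" "\<forall>w\<in>?A. ht P y \<le> ht P w"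
    using twin_parents_ht twin_ht by auto
  moreover have "x \<notin> ?A" "y \<notin> ?A"
    using twin_parents_not_twin by blast+
  ultimately have "avoids P ?A x" "avoids P ?A y"
    using shrub_avoids_if_lowest[OF P] twin_verts by blast+
  then have xy: "x \<in> verts ?R" "y \<in> verts ?R"
    using avoids_not_in_gen twin_verts by auto
  have "j \<notin> gen ?R {x, y}" if j: "j \<in> verts ?R" "j \<notin> {x, y}" for j
  proof -
    have "j \<in> verts P" "avoids P ?A j"
      using j by (auto simp: gen_eq)
    then have "avoids P (?A \<union> {x, y}) j"
      using avoids_twin_parents[OF P] j(2) by blast
    then have "avoids ?R (?A \<union> {x, y}) j"
    proof (rule avoids_restrict_shrub[OF _ wf], intro ballI impI)
      fix v assume "v \<in> verts P" "avoids P (?A \<union> {x, y}) v"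
      then have "avoids P ?A v"
        by (rule_tac avoids_anti_mono) auto
      then show "v \<in> verts P - gen P ?A"
        using \<open>v \<in> verts P\<close> avoids_not_in_gen by blast
    qed
    then have "avoids ?R {x, y} j"
      by (rule avoids_anti_mono) auto
    then show ?thesis
      by (rule avoids_not_in_gen)
  qed
  moreover have "{x, y} \<subseteq> gen ?R {x, y}"
    using gen_supset[of "{x, y}" ?R] xy by auto
  ultimately show ?thesis
    using gen_subset[of ?R "{x, y}"] by blast
qed

lemma gen_del_twin_singleton:
  assumes P: "is_shrub P" and A: "twin_parents P x y = {}"
  shows "gen (del_vertex P y) {x} = {x}"
proof -
  have "j \<notin> gen (del_vertex P y) {x}" if j: "j \<in> verts P" "j \<noteq> y" "j \<noteq> x" for j
  proof -
    have "avoids P {x, y} j"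
      using avoids_twin_parents[OF P] shrub_avoids_empty[OF P j(1)] A j by simp
    then have "avoids (del_vertex P y) {x, y} j"
      using avoids_del_twin[OF _ _ j(1)] j(2) by (simp add: merge_twin_def)
    then show ?thesis
      using avoids_not_in_gen avoids_anti_mono by blast
  qed
  moreover have "x \<in> gen (del_vertex P y) {x}"
    using gen_supset[of "{x}" "del_vertex P y"] twin_verts by auto
  ultimately show ?thesis
    using gen_subset[of "del_vertex P y" "{x}"] by auto
qed

lemma prod_gen_singleton_twin:
  assumes P: "is_shrub P"
  shows "(\<Prod>i\<in>verts P. usum (gen P {i})) =
    u x * u y * (\<Prod>i\<in>verts P - {y} - {x}. usum (split_vars x y (gen (del_vertex P y) {i})))"
proof -
  have fin: "finite (verts P - {x})" "y \<in> verts P - {x}"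
    using shrub_finite[OF P] twin_verts by auto
  then have remove_y: "(\<Prod>i\<in>verts P - {x}. usum (gen P {i})) =
      usum (gen P {y}) * (\<Prod>i\<in>verts P - {x} - {y}. usum (gen P {i}))"
    by (rule prod.remove)
  have "(\<Prod>i\<in>verts P - {x} - {y}. usum (gen P {i})) =
      (\<Prod>i\<in>verts P - {y} - {x}. usum (split_vars x y (gen (del_vertex P y) {i})))"
    by (rule prod.cong) (auto simp: gen_twin)
  then show ?thesis
    unfolding prod.remove[OF shrub_finite[OF P] twin_verts(1)] remove_y
    using gen_twin_singleton[OF P] shrub_twin.gen_twin_singleton[OF shrub_twin.intro[OF wf twin_sym[OF twin]] P]
    by (simp add: usum_def)
qed

lemma prod_Ram_twin:
  assumes P: "is_shrub P" and P': "is_shrub (del_vertex P y)"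
  defines "Q \<equiv> del_vertex P y" and "A \<equiv> twin_parents P x y"
  shows "(\<Prod>r\<in>Ram P. usum (gen (restrict_shrub P (verts P - gen P r)) (rminus P r)) / usum (gen P (rminus P r))) =
    (\<Prod>r\<in>Ram Q. usum (split_vars x y (gen (restrict_shrub Q (verts Q - gen Q r)) (rminus Q r)))
                / usum (split_vars x y (gen Q (rminus Q r)))) *
    (if A = {} then 1 else usum {x, y} / usum (split_vars x y (gen Q {x})))"
proof -
  have factor_Ram_del:
    "usum (gen (restrict_shrub P (verts P - gen P (split_vars x y r))) (rminus P (split_vars x y r)))
       / usum (gen P (rminus P (split_vars x y r))) =
     usum (split_vars x y (gen (restrict_shrub Q (verts Q - gen Q r)) (rminus Q r)))
       / usum (split_vars x y (gen Q (rminus Q r)))"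
    if r: "r \<in> Ram Q" for r
    using gen_restrict_twin[OF not_mem_Ram_del_twin rminus_twin(2)] gen_twin_split_vars[OF rminus_twin(2)]
      r unfolding Q_def by (simp add: rminus_twin(1))
  have factor_twin_parents:
    "usum (gen (restrict_shrub P (verts P - gen P A)) (rminus P A)) / usum (gen P (rminus P A)) =
     usum {x, y} / usum (split_vars x y (gen Q {x}))"
    if "A \<noteq> {}"
    using that unfolding A_def Q_def
    by (simp add: rminus_twin_parents gen_restrict_twin_parents[OF P] gen_twin_pair)
  show ?thesis
    unfolding Ram_twin A_def[symmetric] Q_def[symmetric]
    by (subst prod_image_Un_optional[OF finite_Ram[OF shrub_finite[OF P'], folded Q_def]
        inj_on_split_vars_Ram[folded Q_def] twin_parents_not_in_Ram_del[folded Q_def A_def]])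
      (assumption, intro arg_cong2[where f = "(*)"] prod.cong refl factor_Ram_del, use factor_twin_parents in auto)
qed

lemma f_shrub_twin:
  assumes P: "is_shrub P" and P': "is_shrub (del_vertex P y)"
  shows "f_shrub P = usum {x, y} * (1 / (u x * u y)) * rsubst (split_subst x y) (f_shrub (del_vertex P y))"
proof -
  let ?Q = "del_vertex P y"
  define Pi1 where "Pi1 = (\<Prod>i\<in>verts P - {y} - {x}. usum (split_vars x y (gen ?Q {i})))"
  define Pi2 where "Pi2 = (\<Prod>r\<in>Ram ?Q. usum (split_vars x y (gen (restrict_shrub ?Q (verts ?Q - gen ?Q r)) (rminus ?Q r)))
                                 / usum (split_vars x y (gen ?Q (rminus ?Q r))))"
  define Gx where "Gx = usum (split_vars x y (gen ?Q {x}))"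
  have "(\<Prod>i\<in>verts ?Q. usum (split_vars x y (gen ?Q {i}))) = Gx * Pi1"
    unfolding Gx_def Pi1_def verts_del_vertex using shrub_finite[OF P] twin_verts by (simp add: prod.remove)
  moreover have "y \<notin> verts ?Q"
    by simp
  ultimately have rsubst_f: "rsubst (split_subst x y) (f_shrub ?Q) = 1 / (Gx * Pi1) * Pi2"
    using rsubst_split_f_shrub[OF P' _ twin_verts(3)] unfolding Pi2_def by simp
  have Gx: "twin_parents P x y = {} \<Longrightarrow> Gx = usum {x, y}"
    unfolding Gx_def gen_del_twin_singleton[OF P] by (simp add: split_vars_def insert_commute)
  have "usum {x, y} \<noteq> 0"
    by (rule usum_nonzero) auto
  then show ?thesis
    unfolding rsubst_f unfolding f_shrub_def prod_gen_singleton_twin[OF P] prod_Ram_twin[OF P P']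
    unfolding Pi1_def[symmetric] Pi2_def[symmetric] Gx_def[symmetric] using Gx
    by (cases "twin_parents P x y = {}") (simp_all add: divide_inverse inverse_mult_distrib mult_ac)
qed

end


section \<open>Every shrub with two vertices has a leaf or a pair of twins\<close>

lemma is_shrub_restrict_shrub:
  assumes P: "is_shrub P" and ne: "verts P \<inter> X \<noteq> {}"
    and cover: "\<forall>j\<in>verts P \<inter> X. 0 < ht P j \<longrightarrow> (\<exists>i\<in>X. covers P j i)"
  shows "is_shrub (restrict_shrub P X)"
proof -
  let ?R = "restrict_shrub P X"
  have wf: "wf_shrub P"
    using P by (rule is_shrub_wf)
  have cov: "covers ?R a b \<longleftrightarrow> covers P a b \<and> a \<in> X \<and> b \<in> X" for a b
    using covers_restrict_shrub[OF wf] .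
  have ax1: "ht ?R a = ht ?R b + 1 \<or> ht ?R b = ht ?R a + 1" if "{a, b} \<in> edges ?R" for a b
    using that shrub_edge_ht[OF P, of a b] wf_shrub_edge_verts[OF wf_restrict_shrub[OF wf] that] by auto
  have ax2: "\<exists>i. covers ?R j i" if j: "j \<in> verts ?R" "0 < ht ?R j" for j
  proof -
    obtain i where "i \<in> X" "covers P j i"
      using j cover by auto
    then show ?thesis
      using j cov by auto
  qed
  have ax3: "{b, d} \<in> edges ?R"
    if "distinct [a, b, c, d]" "covers ?R a b" "covers ?R a c" "covers ?R c d" for a b c d
    using that shrub_square[OF P, of a b c d] cov by auto
  have ax4: "{a, e} \<in> edges ?R \<or> {b, c} \<in> edges ?R"
    if "distinct [a, b, c, d, e]" "covers ?R a c" "covers ?R a d" "covers ?R b d" "covers ?R b e"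
    for a b c d e
    using that shrub_zigzag[OF P, of a b c d e] cov by auto
  have wf_R: "wf_shrub ?R"
    using wf by (rule wf_restrict_shrub)
  show ?thesis
    unfolding is_shrub_def
  proof (intro conjI)
    show "finite (verts ?R)" "verts ?R \<noteq> {}"
      using shrub_finite[OF P] ne by simp_all
    show "\<forall>e\<in>edges ?R. \<exists>a b. a \<in> verts ?R \<and> b \<in> verts ?R \<and> a \<noteq> b \<and> e = {a, b}"
      "\<forall>n. n \<notin> verts ?R \<longrightarrow> ht ?R n = 0"
      using wf_R unfolding wf_shrub_def by (rule conjunct1, rule conjunct2)
  qed (use ax1 ax2 ax3 ax4 in blast)+
qed

lemma (in shrub_leaf) is_shrub_del_leaf:
  assumes P: "is_shrub P"
  shows "is_shrub (del_vertex P y)"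
  unfolding del_vertex_def
proof (rule is_shrub_restrict_shrub[OF P])
  show "verts P \<inter> (verts P - {y}) \<noteq> {}"
    using leaf_verts by auto
  show "\<forall>j\<in>verts P \<inter> (verts P - {y}). 0 < ht P j \<longrightarrow> (\<exists>i\<in>verts P - {y}. covers P j i)"
    using shrub_covers_exists[OF P] not_covers_leaf covers_verts[OF wf] by blast
qed

lemma (in shrub_twin) is_shrub_del_twin:
  assumes P: "is_shrub P"
  shows "is_shrub (del_vertex P y)"
  unfolding del_vertex_def
proof (rule is_shrub_restrict_shrub[OF P])
  show "verts P \<inter> (verts P - {y}) \<noteq> {}"
    using twin_verts by auto
  show "\<forall>j\<in>verts P \<inter> (verts P - {y}). 0 < ht P j \<longrightarrow> (\<exists>i\<in>verts P - {y}. covers P j i)"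
  proof (intro ballI impI)
    fix j assume j: "j \<in> verts P \<inter> (verts P - {y})" "0 < ht P j"
    then obtain i where i: "covers P j i"
      using shrub_covers_exists[OF P] by blast
    show "\<exists>i\<in>verts P - {y}. covers P j i"
    proof (cases "i = y")
      case True
      then have "j \<noteq> x"
        using covers_ht[OF i] twin_ht by auto
      then have "covers P j x"
        using covers_twin_iff i True j by auto
      then show ?thesis
        using twin_verts by auto
    qed (use i covers_verts[OF wf i] in blast)
  qed
qed

lemma twin_if_flat:
  assumes P: "is_shrub P" and flat: "\<forall>v\<in>verts P. ht P v = 0"
    and xy: "x \<in> verts P" "y \<in> verts P" "x \<noteq> y"
  shows "twin P x y"
proof -
  have no_edge: "{a, b} \<notin> edges P" if "b \<in> verts P" for a b
  proof
    assume e: "{a, b} \<in> edges P"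
    then have "a \<in> verts P"
      using wf_shrub_edge_verts[OF is_shrub_wf[OF P]] by blast
    then show False
      using shrub_edge_ht[OF P e] flat that by auto
  qed
  show ?thesis
    unfolding twin_def
  proof (intro conjI allI impI)
    show "ht P x = ht P y"
      using flat xy by simp
    show "{x, y} \<notin> edges P"
      using no_edge[OF xy(2)] .
  qed (use xy no_edge[OF xy(1)] no_edge[OF xy(2)] in simp_all)
qed

lemma leaf_if_top_single_cover:
  assumes P: "is_shrub P" and y0: "y0 \<in> verts P" "\<forall>v\<in>verts P. ht P v \<le> ht P y0"
    and below: "below P y0 = {x}"
  shows "leaf P x y0"
proof -
  have wf: "wf_shrub P"
    using P by (rule is_shrub_wf)
  have cx: "covers P y0 x"
    using below unfolding below_def by auto
  have "e = {x, y0}" if e: "e \<in> edges P" "y0 \<in> e" for e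
  proof -
    obtain z where z: "z \<in> verts P" "z \<noteq> y0" "e = {z, y0}"
      using wf_shrub_edge_other[OF wf e] .
    then have "ht P y0 = ht P z + 1"
      using shrub_edge_ht[OF P, of z y0] e y0(2) by force
    then have "covers P y0 z"
      using e(1) z(3) unfolding covers_def by (simp add: insert_commute)
    then show ?thesis
      using below z(3) unfolding below_def by auto
  qed
  moreover have "{x, y0} \<in> edges P"
    using cx unfolding covers_def by simp
  ultimately show ?thesis
    unfolding leaf_def using covers_verts[OF wf cx] covers_ht[OF cx] by blast
qed

lemma below_subset_below_top:
  assumes P: "is_shrub P" and bc: "covers P y0 b" "covers P y0 c" "b \<noteq> c"
    and v: "covers P v b" "v \<noteq> c" "{v, c} \<notin> edges P" "ht P v = ht P y0"
  shows "below P v \<subseteq> below P y0"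
proof
  fix e assume "e \<in> below P v"
  then have ce: "covers P v e"
    unfolding below_def by simp
  show "e \<in> below P y0"
  proof (cases "e = b")
    case False
    have "e \<noteq> c"
      using ce v(3) unfolding covers_def by (auto simp: insert_commute)
    moreover have "v \<noteq> y0"
      using bc(2) v(3) unfolding covers_def by (auto simp: insert_commute)
    ultimately have "distinct [y0, v, c, b, e]"
      using bc v covers_ht[OF bc(1)] covers_ht[OF bc(2)] covers_ht[OF ce] False by auto
    then have "{y0, e} \<in> edges P"
      using shrub_zigzag[OF P _ bc(2) bc(1) v(1) ce] v(3) by blast
    then show ?thesis
      using covers_ht[OF ce] v(4) unfolding below_def covers_def by (simp add: insert_commute)
  qed (use bc(1) below_def in simp)
qed

text \<open>Let \<open>y\<^sub>0\<close> cover \<open>b\<close> and \<open>c\<close>. An edge \<open>{v, b}\<close> forces the edge \<open>{v, c}\<close>: below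
  \<open>b\<close> by axiom (3); above \<open>b\<close>, since otherwise axiom (4) would make \<open>v\<close> cover a proper
  subset of what \<open>y\<^sub>0\<close> covers, contradicting the choice of \<open>y\<^sub>0\<close>.\<close>

lemma edge_transfer_below_top:
  assumes P: "is_shrub P" and y0: "y0 \<in> verts P" "\<forall>v\<in>verts P. ht P v \<le> ht P y0"
    and min: "\<forall>v\<in>verts P. ht P v = ht P y0 \<longrightarrow> card (below P y0) \<le> card (below P v)"
    and bc: "covers P y0 b" "covers P y0 c" "b \<noteq> c"
    and v: "v \<noteq> b" "v \<noteq> c" and e: "{v, b} \<in> edges P"
  shows "{v, c} \<in> edges P"
proof -
  have wf: "wf_shrub P"
    using P by (rule is_shrub_wf)
  have hb: "ht P y0 = Suc (ht P b)" "ht P y0 = Suc (ht P c)"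
    using covers_ht[OF bc(1)] covers_ht[OF bc(2)] by auto
  consider "ht P b = ht P v + 1" | "ht P v = ht P b + 1"
    using shrub_edge_ht[OF P e] by blast
  then show ?thesis
  proof cases
    case 1
    then have "covers P b v"
      using e unfolding covers_def by simp
    moreover have "distinct [y0, c, b, v]"
      using bc v hb 1 by auto
    ultimately have "{c, v} \<in> edges P"
      using shrub_square[OF P _ bc(2) bc(1)] by blast
    then show ?thesis by (simp add: insert_commute)
  next
    case 2
    show ?thesis
    proof (rule ccontr)
      assume nc: "{v, c} \<notin> edges P"
      have "covers P v b"
        using e 2 unfolding covers_def by (simp add: insert_commute)
      then have "below P v \<subseteq> below P y0"
        using below_subset_below_top[OF P bc] v(2) nc 2 hb by simp
      moreover have "c \<notin> below P v" "c \<in> below P y0"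
        using nc bc(2) unfolding below_def covers_def by (auto simp: insert_commute)
      ultimately have "card (below P v) < card (below P y0)"
        using psubset_card_mono[OF finite_below[OF wf shrub_finite[OF P]]] by blast
      moreover have "v \<in> verts P"
        using wf_shrub_edge_verts[OF wf e] by simp
      ultimately show False
        using min 2 hb by fastforce
    qed
  qed
qed

lemma twin_below_top:
  assumes P: "is_shrub P" and y0: "y0 \<in> verts P" "\<forall>v\<in>verts P. ht P v \<le> ht P y0"
    and min: "\<forall>v\<in>verts P. ht P v = ht P y0 \<longrightarrow> card (below P y0) \<le> card (below P v)"
    and bc: "covers P y0 b" "covers P y0 c" "b \<noteq> c"
  shows "twin P b c"
proof -
  have "ht P b = ht P c"
    using covers_ht[OF bc(1)] covers_ht[OF bc(2)] by simp
  moreover have "{b, c} \<notin> edges P"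
    using shrub_edge_ht[OF P, of b c] calculation by auto
  moreover have "{v, b} \<in> edges P \<longleftrightarrow> {v, c} \<in> edges P" if "v \<noteq> b" "v \<noteq> c" for v
    using edge_transfer_below_top[OF assms] edge_transfer_below_top[OF P y0 min bc(2,1) bc(3)[symmetric]] that
    by blast
  ultimately show ?thesis
    unfolding twin_def using bc covers_verts[OF is_shrub_wf[OF P]] by auto
qed

lemma two_distinct_if_card:
  assumes "finite A" "\<not> card A \<le> Suc 0"
  obtains a b where "a \<in> A" "b \<in> A" "a \<noteq> b"
  using assms card_le_Suc0_iff_eq[OF assms(1)] by blast

lemma top_vertex_with_fewest_covers:
  assumes "finite (verts P)" "verts P \<noteq> {}"
  obtains y0 where "y0 \<in> verts P" "\<forall>v\<in>verts P. ht P v \<le> ht P y0"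
    "\<forall>v\<in>verts P. ht P v = ht P y0 \<longrightarrow> card (below P y0) \<le> card (below P v)"
proof -
  define T where "T = {v \<in> verts P. \<forall>w\<in>verts P. ht P w \<le> ht P v}"
  have "Max (ht P ` verts P) \<in> ht P ` verts P"
    using assms by (intro Max_in) auto
  then obtain y1 where y1: "Max (ht P ` verts P) = ht P y1" "y1 \<in> verts P"
    by (rule imageE)
  have "ht P w \<le> ht P y1" if "w \<in> verts P" for w
    unfolding y1(1)[symmetric] using assms(1) that by (intro Max_ge) auto
  then have "y1 \<in> T"
    unfolding T_def using y1(2) by blast
  then obtain y0 where y0: "y0 \<in> T" "\<forall>v. v \<in> T \<longrightarrow> card (below P y0) \<le> card (below P v)"
    using ex_has_least_nat[of "\<lambda>v. v \<in> T" y1 "\<lambda>v. card (below P v)"] by blast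
  have top: "y0 \<in> verts P" "\<forall>v\<in>verts P. ht P v \<le> ht P y0"
    using y0(1) unfolding T_def by auto
  have "v \<in> T" if "v \<in> verts P" "ht P v = ht P y0" for v
    using that top(2) unfolding T_def by simp
  then show thesis
    using that top y0(2) by blast
qed

lemma leaf_or_twin_exists:
  assumes P: "is_shrub P" and two: "2 \<le> card (verts P)"
  shows "\<exists>x y. leaf P x y \<or> twin P x y"
proof -
  have fin: "finite (verts P)" and wf: "wf_shrub P"
    using P by (simp_all add: shrub_finite is_shrub_wf)
  show ?thesis
  proof (cases "\<forall>v\<in>verts P. ht P v = 0")
    case True
    obtain x y where "x \<in> verts P" "y \<in> verts P" "x \<noteq> y"
      using fin two by (elim two_distinct_if_card) auto
    then show ?thesis
      using twin_if_flat[OF P True] by blast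
  next
    case False
    obtain y0 where top: "y0 \<in> verts P" "\<forall>v\<in>verts P. ht P v \<le> ht P y0"
      and min: "\<forall>v\<in>verts P. ht P v = ht P y0 \<longrightarrow> card (below P y0) \<le> card (below P v)"
      using top_vertex_with_fewest_covers[OF fin shrub_nonempty[OF P]] by blast
    obtain v where "v \<in> verts P" "ht P v \<noteq> 0"
      using False by blast
    then obtain i where "covers P y0 i"
      using shrub_covers_exists[OF P top(1)] top(2) by fastforce
    then have ne: "below P y0 \<noteq> {}"
      unfolding below_def by auto
    show ?thesis
    proof (cases "card (below P y0) \<le> Suc 0")
      case True
      then have "card (below P y0) = 1"
        using ne finite_below[OF wf fin] by (simp add: le_Suc_eq)
      then obtain x where "below P y0 = {x}"
        by (rule card_1_singletonE)
      then show ?thesis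
        using leaf_if_top_single_cover[OF P top] by blast
    next
      case False
      obtain b c where "b \<in> below P y0" "c \<in> below P y0" "b \<noteq> c"
        by (rule two_distinct_if_card[OF finite_below[OF wf fin] False])
      then show ?thesis
        using twin_below_top[OF P top min] unfolding below_def by blast
    qed
  qed
qed


lemma shrub_eqI: "verts P = verts Q \<Longrightarrow> edges P = edges Q \<Longrightarrow> ht P = ht Q \<Longrightarrow> P = (Q::shrub)"
  by (cases P, cases Q) simp

lemma edge_shrub_simps [simp]:
  "verts (edge_shrub a b) = {a, b}" "edges (edge_shrub a b) = {{a, b}}"
  "ht (edge_shrub a b) n = (if n = b then 1 else 0)"
  by (simp_all add: edge_shrub_def)

lemma two_roots_simps [simp]:
  "verts (two_roots a b) = {a, b}" "edges (two_roots a b) = {}" "ht (two_roots a b) n = 0"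
  by (simp_all add: two_roots_def)

lemma unit_shrub_simps [simp]:
  "verts (unit_shrub a) = {a}" "edges (unit_shrub a) = {}" "ht (unit_shrub a) n = 0"
  by (simp_all add: unit_shrub_def)

lemma edges_del_vertex: "edges (del_vertex P y) = {e \<in> edges P. e \<subseteq> verts P - {y}}"
  by (simp add: del_vertex_def)

lemma (in shrub_leaf) shrub_comp_del_leaf: "shrub_comp (del_vertex P y) x (edge_shrub x y) = P"
proof (rule shrub_eqI)
  show "verts (shrub_comp (del_vertex P y) x (edge_shrub x y)) = verts P"
    unfolding shrub_comp_def using leaf_verts by auto
  show "ht (shrub_comp (del_vertex P y) x (edge_shrub x y)) = ht P"
    using leaf_verts leaf wf unfolding shrub_comp_def leaf_def wf_shrub_def
    by (auto simp: del_vertex_def fun_eq_iff)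
  have edges: "edges (shrub_comp (del_vertex P y) x (edge_shrub x y)) =
      {e \<in> edges (del_vertex P y). x \<notin> e} \<union> {{x, y}} \<union> {{j, x} |j. {j, x} \<in> edges (del_vertex P y)}"
    unfolding shrub_comp_def using leaf_verts by auto
  show "edges (shrub_comp (del_vertex P y) x (edge_shrub x y)) = edges P"
  proof (intro equalityI subsetI)
    fix e assume "e \<in> edges (shrub_comp (del_vertex P y) x (edge_shrub x y))"
    then show "e \<in> edges P"
      unfolding edges edges_del_vertex using leaf unfolding leaf_def by blast
  next
    fix e assume e: "e \<in> edges P"
    show "e \<in> edges (shrub_comp (del_vertex P y) x (edge_shrub x y))"
    proof (cases "y \<in> e")
      case True
      then show ?thesis
        unfolding edges using edge_at_leaf[OF e] by blast
    next
      case False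
      then have e': "e \<in> edges (del_vertex P y)"
        using e wf_shrub_edge_subset[OF wf e] unfolding edges_del_vertex by auto
      show ?thesis
      proof (cases "x \<in> e")
        case True
        then obtain j where "e = {j, x}"
          using wf_shrub_edge_other[OF wf e] by metis
        then show ?thesis
          unfolding edges using e' by blast
      qed (use e' in \<open>unfold edges, blast\<close>)
    qed
  qed
qed

lemma (in shrub_twin) shrub_comp_del_twin: "shrub_comp (del_vertex P y) x (two_roots x y) = P"
proof (rule shrub_eqI)
  have nxy: "{x, y} \<notin> edges P" and same: "\<And>v. v \<noteq> x \<Longrightarrow> v \<noteq> y \<Longrightarrow> {v, x} \<in> edges P \<longleftrightarrow> {v, y} \<in> edges P"
    using twin unfolding twin_def by auto
  show "verts (shrub_comp (del_vertex P y) x (two_roots x y)) = verts P"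
    unfolding shrub_comp_def using twin_verts by auto
  show "ht (shrub_comp (del_vertex P y) x (two_roots x y)) = ht P"
    using twin_verts twin_ht wf unfolding shrub_comp_def wf_shrub_def
    by (auto simp: del_vertex_def fun_eq_iff)
  have edges: "edges (shrub_comp (del_vertex P y) x (two_roots x y)) =
      {e \<in> edges (del_vertex P y). x \<notin> e} \<union> {{j, k} |j k. {j, x} \<in> edges (del_vertex P y) \<and> k \<in> {x, y}}"
    unfolding shrub_comp_def by simp
  show "edges (shrub_comp (del_vertex P y) x (two_roots x y)) = edges P"
  proof (intro equalityI subsetI)
    fix e assume "e \<in> edges (shrub_comp (del_vertex P y) x (two_roots x y))"
    then consider "e \<in> edges P" | j k where "e = {j, k}" "{j, x} \<in> edges P" "j \<noteq> y" "k \<in> {x, y}"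
      unfolding edges edges_del_vertex by blast
    then show "e \<in> edges P"
    proof cases
      case 2
      then have "j \<noteq> x"
        using wf_shrub_edge_verts[OF wf] by blast
      then show ?thesis
        using 2 same by auto
    qed
  next
    fix e assume e: "e \<in> edges P"
    have ev: "e \<subseteq> verts P"
      using wf_shrub_edge_subset[OF wf e] .
    show "e \<in> edges (shrub_comp (del_vertex P y) x (two_roots x y))"
    proof (cases "x \<in> e \<or> y \<in> e")
      case True
      then obtain j k where jk: "e = {j, k}" "k \<in> {x, y}" "j \<in> verts P" "j \<noteq> k"
        using wf_shrub_edge_other[OF wf e] by (metis insertCI)
      then have "j \<noteq> x" "j \<noteq> y"
        using nxy e by (auto simp: insert_commute)
      then have "{j, x} \<in> edges (del_vertex P y)"
        using e jk same twin_verts unfolding edges_del_vertex by auto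
      then show ?thesis
        unfolding edges using jk by blast
    next
      case False
      then show ?thesis
        unfolding edges edges_del_vertex using e ev by blast
    qed
  qed
qed

lemma covers_edge_shrub: "a \<noteq> b \<Longrightarrow> covers (edge_shrub a b) j i \<longleftrightarrow> j = b \<and> i = a"
  unfolding covers_def by (auto simp: doubleton_eq_iff)

lemma is_shrub_edge_shrub:
  assumes "a \<noteq> b"
  shows "is_shrub (edge_shrub a b)"
  unfolding is_shrub_def covers_edge_shrub[OF assms] using assms by (auto simp: doubleton_eq_iff)

lemma is_shrub_two_roots: "a \<noteq> b \<Longrightarrow> is_shrub (two_roots a b)"
  unfolding is_shrub_def covers_def by simp

lemma is_shrub_unit_shrub: "is_shrub (unit_shrub a)"
  unfolding is_shrub_def covers_def by simp

lemma two_roots_commute: "two_roots a b = two_roots b a"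
  by (simp add: two_roots_def insert_commute)

lemma shrub_comp_edge_shrub_lower:
  "a \<noteq> b \<Longrightarrow> m \<noteq> b \<Longrightarrow> shrub_comp (edge_shrub a b) a (unit_shrub m) = edge_shrub m b"
  by (rule shrub_eqI) (auto simp: shrub_comp_def insert_commute doubleton_eq_iff)

lemma shrub_comp_edge_shrub_upper:
  "a \<noteq> b \<Longrightarrow> m \<noteq> a \<Longrightarrow> shrub_comp (edge_shrub a b) b (unit_shrub m) = edge_shrub a m"
  by (rule shrub_eqI) (auto simp: shrub_comp_def insert_commute doubleton_eq_iff)

lemma shrub_comp_two_roots:
  "a \<noteq> b \<Longrightarrow> m \<noteq> b \<Longrightarrow> shrub_comp (two_roots a b) a (unit_shrub m) = two_roots m b"
  by (rule shrub_eqI) (auto simp: shrub_comp_def)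

lemma f_shrub_unit_shrub: "f_shrub (unit_shrub m) = 1 / u m"
proof -
  have "Ram (unit_shrub m) = {}"
    unfolding Ram_def ramified_def covers_def by simp
  moreover have "gen (unit_shrub m) {m} = {m}"
    using gen_subset[of "unit_shrub m" "{m}"] gen_supset[of "{m}" "unit_shrub m"] by auto
  ultimately show ?thesis
    unfolding f_shrub_def by (simp add: usum_def)
qed

lemma unit_shrub_if_card_one:
  assumes P: "is_shrub P" and "card (verts P) = 1"
  obtains m where "P = unit_shrub m"
proof -
  obtain m where m: "verts P = {m}"
    using assms(2) by (rule card_1_singletonE)
  have wf: "wf_shrub P"
    using P by (rule is_shrub_wf)
  have e: "edges P = {}"
    using m by (auto elim: wf_shrub_edgeE[OF wf])
  have "ht P n = 0" for n
    using wf shrub_covers_exists[OF P, of n] e m unfolding wf_shrub_def covers_def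
    by (cases "n = m") auto
  then have "P = unit_shrub m"
    using m e by (intro shrub_eqI) auto
  then show thesis ..
qed

lemma rsubst_inverse_mult_u:
  "g p \<noteq> 0 \<Longrightarrow> g q \<noteq> 0 \<Longrightarrow> rsubst g (1 / (u p * u q)) = 1 / (g p * g q)"
  using substitutable_divide[OF substitutable_one substitutable_mult(1)[OF substitutable_u substitutable_u]]
  by (simp add: rsubst_one substitutable_mult(2) substitutable_u rsubst_u)

lemma rsubst_inverse_edge_u:
  assumes "g p \<noteq> 0" "g q + g p \<noteq> 0"
  shows "rsubst g (1 / (u p * (u q + u p))) = 1 / (g p * (g q + g p))"
proof -
  have sum: "substitutable g (u q + u p)" "rsubst g (u q + u p) = g q + g p"
    using substitutable_add[OF substitutable_u substitutable_u] by (simp_all add: rsubst_u)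
  have "substitutable g (u p * (u q + u p))" "rsubst g (u p * (u q + u p)) = g p * (g q + g p)"
    using substitutable_mult[OF substitutable_u sum(1)] sum(2) by (simp_all add: rsubst_u)
  then show ?thesis
    using substitutable_divide[OF substitutable_one] assms by (simp add: rsubst_one)
qed

lemma u_add_nonzero: "m \<noteq> b \<Longrightarrow> u m + u b \<noteq> 0"
  using usum_nonzero[of "{m, b}"] by (simp add: usum_def)

section \<open>Operad morphisms determined by the two generators\<close>

locale arb_mould_kappa =
  fixes \<kappa> :: "shrub \<Rightarrow> rfun"
  assumes morphism: "arb_mould_morphism \<kappa>"
    and kappa_edge_21: "\<kappa> (edge_shrub 2 1) = 1 / (u 1 * (u 1 + u 2))"
    and kappa_roots_12: "\<kappa> (two_roots 1 2) = 1 / (u 1 * u 2)"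
begin

lemma kappa_unit_shrub: "\<kappa> (unit_shrub n) = 1 / u n"
  using morphism unfolding arb_mould_morphism_def by blast

lemma kappa_shrub_comp:
  "is_shrub P \<Longrightarrow> is_shrub Q \<Longrightarrow> i \<in> verts P \<Longrightarrow> verts Q \<inter> (verts P - {i}) = {} \<Longrightarrow>
   \<kappa> (shrub_comp P i Q) = mcomp (verts P) i (verts Q) (\<kappa> P) (\<kappa> Q)"
  using morphism unfolding arb_mould_morphism_def by blast

lemma kappa_shrub_comp_unit:
  assumes Q: "is_shrub Q" and i: "i \<in> verts Q" and m: "m \<notin> verts Q - {i}"
  shows "\<kappa> (shrub_comp Q i (unit_shrub m)) = rsubst (\<lambda>n. if n = i then u m else u n) (\<kappa> Q)"
proof -
  have "(\<lambda>n. if n = i then usum {m} else u n) = (\<lambda>n. if n = i then u m else u n)"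
    by (rule ext) (simp add: usum_def)
  then show ?thesis
    using kappa_shrub_comp[OF Q is_shrub_unit_shrub i] m u_nonzero[of m]
    by (simp add: kappa_unit_shrub mcomp_def usum_def)
qed

lemma kappa_edge_shrub_rename_lower:
  assumes "a \<noteq> b" "m \<noteq> b" "\<kappa> (edge_shrub a b) = 1 / (u b * (u a + u b))"
  shows "\<kappa> (edge_shrub m b) = 1 / (u b * (u m + u b))"
proof -
  have "\<kappa> (edge_shrub m b) = rsubst (\<lambda>n. if n = a then u m else u n) (\<kappa> (edge_shrub a b))"
    using kappa_shrub_comp_unit[OF is_shrub_edge_shrub[OF assms(1)], of a m]
      shrub_comp_edge_shrub_lower[OF assms(1,2)] assms(2) by simp
  then show ?thesis
    using assms rsubst_inverse_edge_u u_nonzero u_add_nonzero by simp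
qed

lemma kappa_edge_shrub_rename_upper:
  assumes "a \<noteq> b" "m \<noteq> a" "\<kappa> (edge_shrub a b) = 1 / (u b * (u a + u b))"
  shows "\<kappa> (edge_shrub a m) = 1 / (u m * (u a + u m))"
proof -
  have "\<kappa> (edge_shrub a m) = rsubst (\<lambda>n. if n = b then u m else u n) (\<kappa> (edge_shrub a b))"
    using kappa_shrub_comp_unit[OF is_shrub_edge_shrub[OF assms(1)], of b m]
      shrub_comp_edge_shrub_upper[OF assms(1,2)] assms(2) by simp
  then show ?thesis
    using assms rsubst_inverse_edge_u u_nonzero u_add_nonzero by simp
qed

lemma kappa_two_roots_rename:
  assumes "a \<noteq> b" "m \<noteq> b" "\<kappa> (two_roots a b) = 1 / (u a * u b)"
  shows "\<kappa> (two_roots m b) = 1 / (u m * u b)"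
proof -
  have "\<kappa> (two_roots m b) = rsubst (\<lambda>n. if n = a then u m else u n) (\<kappa> (two_roots a b))"
    using kappa_shrub_comp_unit[OF is_shrub_two_roots[OF assms(1)], of a m]
      shrub_comp_two_roots[OF assms(1,2)] assms(2) by simp
  then show ?thesis
    using assms rsubst_inverse_mult_u u_nonzero by simp
qed

lemma kappa_edge_shrub:
  assumes "a \<noteq> b"
  shows "\<kappa> (edge_shrub a b) = 1 / (u b * (u a + u b))"
proof -
  define m where "m = a + b + 3"
  have m: "m \<noteq> 1" "m \<noteq> a" "m \<noteq> b" "m \<noteq> 2"
    unfolding m_def by auto
  have "\<kappa> (edge_shrub 2 1) = 1 / (u 1 * (u 2 + u 1))"
    using kappa_edge_21 by (simp add: add.commute)
  then have "\<kappa> (edge_shrub m 1) = 1 / (u 1 * (u m + u 1))"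
    by (rule kappa_edge_shrub_rename_lower[rotated 2]) (use m in simp_all)
  then have "\<kappa> (edge_shrub m b) = 1 / (u b * (u m + u b))"
    by (rule kappa_edge_shrub_rename_upper[rotated 2]) (use m in simp_all)
  then show ?thesis
    by (rule kappa_edge_shrub_rename_lower[rotated 2]) (use m assms in simp_all)
qed

lemma kappa_two_roots:
  assumes "a \<noteq> b"
  shows "\<kappa> (two_roots a b) = 1 / (u a * u b)"
proof -
  define m where "m = a + b + 3"
  have m: "m \<noteq> 1" "m \<noteq> a" "m \<noteq> b" "m \<noteq> 2"
    unfolding m_def by auto
  have "\<kappa> (two_roots m 2) = 1 / (u m * u 2)"
    by (rule kappa_two_roots_rename[rotated 2, OF kappa_roots_12]) (use m in simp_all)
  then have "\<kappa> (two_roots 2 m) = 1 / (u 2 * u m)"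
    by (simp add: two_roots_commute mult.commute)
  then have "\<kappa> (two_roots b m) = 1 / (u b * u m)"
    by (rule kappa_two_roots_rename[rotated 2]) (use m in simp_all)
  then have "\<kappa> (two_roots m b) = 1 / (u m * u b)"
    by (simp add: two_roots_commute mult.commute)
  then show ?thesis
    by (rule kappa_two_roots_rename[rotated 2]) (use m assms in simp_all)
qed

lemma kappa_graft:
  assumes "is_shrub (del_vertex P y)" "is_shrub G" "x \<in> verts P" "x \<noteq> y" "verts G = {x, y}"
  shows "\<kappa> (shrub_comp (del_vertex P y) x G) = usum {x, y} * \<kappa> G * rsubst (split_subst x y) (\<kappa> (del_vertex P y))"
  using kappa_shrub_comp[OF assms(1,2)] assms(3-5) by (simp add: mcomp_def split_subst_def)

lemma kappa_leaf:
  assumes P: "is_shrub P" and l: "shrub_leaf P x y"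
  shows "\<kappa> P = 1 / u y * rsubst (split_subst x y) (\<kappa> (del_vertex P y))"
proof -
  interpret shrub_leaf P x y by (fact l)
  have "\<kappa> P = usum {x, y} * (1 / (u y * (u x + u y))) * rsubst (split_subst x y) (\<kappa> (del_vertex P y))"
    using kappa_graft[OF is_shrub_del_leaf[OF P] is_shrub_edge_shrub[OF leaf_verts(3)] leaf_verts(1,3)]
    by (simp add: shrub_comp_del_leaf kappa_edge_shrub[OF leaf_verts(3)])
  then show ?thesis
    using u_add_nonzero[OF leaf_verts(3)] leaf_verts(3) by (simp add: usum_def)
qed

lemma kappa_twin:
  assumes P: "is_shrub P" and t: "shrub_twin P x y"
  shows "\<kappa> P = usum {x, y} * (1 / (u x * u y)) * rsubst (split_subst x y) (\<kappa> (del_vertex P y))"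
proof -
  interpret shrub_twin P x y by (fact t)
  show ?thesis
    using kappa_graft[OF is_shrub_del_twin[OF P] is_shrub_two_roots[OF twin_verts(3)] twin_verts(1,3)]
    by (simp add: shrub_comp_del_twin kappa_two_roots[OF twin_verts(3)])
qed

lemma kappa_eq_f_shrub_step:
  assumes P: "is_shrub P" and two: "2 \<le> card (verts P)"
    and IH: "\<And>y. y \<in> verts P \<Longrightarrow> is_shrub (del_vertex P y) \<Longrightarrow> \<kappa> (del_vertex P y) = f_shrub (del_vertex P y)"
  shows "\<kappa> P = f_shrub P"
proof -
  obtain x y where "leaf P x y \<or> twin P x y"
    using leaf_or_twin_exists[OF P two] by blast
  then show ?thesis
  proof
    assume "leaf P x y"
    then interpret shrub_leaf P x y
      using is_shrub_wf[OF P] by unfold_locales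
    show ?thesis
      using kappa_leaf[OF P shrub_leaf_axioms] f_shrub_leaf[OF P is_shrub_del_leaf[OF P]]
        IH[OF leaf_verts(2) is_shrub_del_leaf[OF P]] by simp
  next
    assume "twin P x y"
    then interpret shrub_twin P x y
      using is_shrub_wf[OF P] by unfold_locales
    show ?thesis
      using kappa_twin[OF P shrub_twin_axioms] f_shrub_twin[OF P is_shrub_del_twin[OF P]]
        IH[OF twin_verts(2) is_shrub_del_twin[OF P]] by simp
  qed
qed

end

theorem mainTheorem12:
  fixes \<kappa> :: "shrub \<Rightarrow> rfun" and P :: shrub
  assumes "arb_mould_morphism \<kappa>"
    and "\<kappa> (edge_shrub 2 1) = 1 / (u 1 * (u 1 + u 2))"
    and "\<kappa> (two_roots 1 2) = 1 / (u 1 * u 2)"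
    and "is_shrub P"
  shows "\<kappa> P = f_shrub P"
proof -
  interpret arb_mould_kappa \<kappa>
    using assms(1-3) by unfold_locales
  show ?thesis
    using assms(4)
  proof (induction "card (verts P)" arbitrary: P rule: less_induct)
    case less
    have fin: "finite (verts P)" and "card (verts P) \<noteq> 0"
      using less.prems shrub_finite shrub_nonempty by auto
    then consider "card (verts P) = 1" | "2 \<le> card (verts P)"
      by linarith
    then show ?case
    proof cases
      case 1
      then show ?thesis
        using unit_shrub_if_card_one[OF less.prems] kappa_unit_shrub f_shrub_unit_shrub by metis
    qed (use kappa_eq_f_shrub_step less card_del_vertex[OF fin] in blast)
  qed
qed


end
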